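(* Let $t\in\mathbb{N}\setminus\{0,1\}$, let $K_1,\ldots,K_t,L_1,\ldots,L_t$ be bi--lattices with $|K_i|>2$ for all $i\in[1,t]$, let $K=\boxplus_{i=1}^tK_i$ and $L=\boxplus_{i=1}^t({\cal L}_2\oplus L_i\oplus{\cal L}_2)$. Then: (1) ${\rm Con}_{\mathbb{BI}}(K)=\{\boxplus_{i=1}^t\alpha_i\ :\ \alpha_i\in{\rm Con}_{\mathbb{BI}01}(K_i)\text{ for all }i\in[1,t]\}\cup\{\nabla_K\}\cong\left(\prod_{i=1}^t{\rm Con}_{\mathbb{BI}01}(K_i)\right)\oplus{\cal L}_2$; (2) ${\rm Con}_{\mathbb{BI}}(L)=\{eq(\{\{0\},\{1\}\}\cup\bigcup_{i=1}^tL_i/\alpha_i)\ :\ \alpha_i\in{\rm Con}_{\mathbb{BI}}(L_i)\text{ for all }i\in[1,t]\}\cup\{\nabla_L\}\cong\left(\prod_{i=1}^t{\rm Con}_{\mathbb{BI}}(L_i)\right)\oplus{\cal L}_2$.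
   Context: A bi--lattice is a bounded lattice with a unary operation $'$ satisfying $a''=a$ and $a\leq b\Rightarrow b'\leq a'$. ${\rm Con}_{\mathbb{BI}}(A)$ is the lattice of lattice congruences $\theta$ of $A$ with $(a,b)\in\theta\Rightarrow(a',b')\in\theta$; ${\rm Con}_{\mathbb{BI}01}(A)$ is the set of those $\theta\in{\rm Con}_{\mathbb{BI}}(A)$ with $0/\theta=\{0\}$ and $1/\theta=\{1\}$. $\Delta_A$, $\nabla_A$ are the identity and total relations; for a partition $\pi$ of a set, $eq(\pi)$ is the corresponding equivalence. ${\cal L}_2$ is the two--element chain. Ordinal sum $A\oplus B$ (lattice $A$ with top, $B$ with bottom): $B$ placed above $A$ with the top of $A$ identified with the bottom of $B$; for a bi--lattice $M$, ${\cal L}_2\oplus M\oplus{\cal L}_2$ is the bi--lattice obtained by adding a new bottom $0$ and new top $1$ to $M$, with $0'=1$, $1'=0$ and the involution of $M$ on $M$. Horizontal sum $A\boxplus B$ of non--trivial bounded lattices: the disjoint union of $A$ and $B$ with their bottoms identified (as $0$) and their tops identified (as $1$), ordered by the union of the two orders; for bi--lattices its involution is that of $A$ on $A$ and that of $B$ on $B$; this operation is associative and commutative. For equivalences $\delta\neq\nabla_A$ on $A$ and $\varepsilon\neq\nabla_B$ on $B$, $\delta\boxplus\varepsilon$ is the equivalence on $A\boxplus B$ whose classes are the classes of $\delta$ other than $0/\delta,1/\delta$, the classes of $\varepsilon$ other than $0/\varepsilon,1/\varepsilon$, and $0/\delta\cup0/\varepsilon$, $1/\delta\cup1/\varepsilon$;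 this operation is extended associatively to $\boxplus_{i=1}^t\alpha_i$. Products of lattices are direct products; $\cong$ is lattice isomorphism. *)

theory Defs
  imports Main "HOL-Library.FuncSet"
begin

record 'a bilat =
  car :: "'a set"
  le  :: "'a \<Rightarrow> 'a \<Rightarrow> bool"
  inv :: "'a \<Rightarrow> 'a"

definition is_lub :: "'a bilat \<Rightarrow> 'a \<Rightarrow> 'a \<Rightarrow> 'a \<Rightarrow> bool" where
  "is_lub B x y z \<longleftrightarrow> z \<in> car B \<and> le B x z \<and> le B y z \<and>
     (\<forall>w\<in>car B. le B x w \<and> le B y w \<longrightarrow> le B z w)"

definition is_glb :: "'a bilat \<Rightarrow> 'a \<Rightarrow> 'a \<Rightarrow> 'a \<Rightarrow> bool" where
  "is_glb B x y z \<longleftrightarrow> z \<in> car B \<and> le B z x \<and> le B z y \<and>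
     (\<forall>w\<in>car B. le B w x \<and> le B w y \<longrightarrow> le B w z)"

definition join :: "'a bilat \<Rightarrow> 'a \<Rightarrow> 'a \<Rightarrow> 'a" where
  "join B x y = (THE z. is_lub B x y z)"

definition meet :: "'a bilat \<Rightarrow> 'a \<Rightarrow> 'a \<Rightarrow> 'a" where
  "meet B x y = (THE z. is_glb B x y z)"

definition bot :: "'a bilat \<Rightarrow> 'a" where
  "bot B = (THE z. z \<in> car B \<and> (\<forall>x\<in>car B. le B z x))"

definition top :: "'a bilat \<Rightarrow> 'a" where
  "top B = (THE z. z \<in> car B \<and> (\<forall>x\<in>car B. le B x z))"

definition bounded_lattice_on :: "'a bilat \<Rightarrow> bool" where
  "bounded_lattice_on B \<longleftrightarrow>
     (\<forall>x\<in>car B. le B x x) \<and>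
     (\<forall>x\<in>car B. \<forall>y\<in>car B. le B x y \<and> le B y x \<longrightarrow> x = y) \<and>
     (\<forall>x\<in>car B. \<forall>y\<in>car B. \<forall>z\<in>car B. le B x y \<and> le B y z \<longrightarrow> le B x z) \<and>
     (\<forall>x\<in>car B. \<forall>y\<in>car B. (\<exists>z. is_lub B x y z) \<and> (\<exists>z. is_glb B x y z)) \<and>
     (\<exists>z\<in>car B. \<forall>x\<in>car B. le B z x) \<and>
     (\<exists>z\<in>car B. \<forall>x\<in>car B. le B x z)"

definition bi_lattice :: "'a bilat \<Rightarrow> bool" where
  "bi_lattice B \<longleftrightarrow> bounded_lattice_on B \<and>
     (\<forall>a\<in>car B. inv B a \<in> car B) \<and>
     (\<forall>a\<in>car B. inv B (inv B a) = a) \<and>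
     (\<forall>a\<in>car B. \<forall>b\<in>car B. le B a b \<longrightarrow> le B (inv B b) (inv B a))"

definition lat_cong :: "'a bilat \<Rightarrow> ('a \<times> 'a) set \<Rightarrow> bool" where
  "lat_cong B \<theta> \<longleftrightarrow> equiv (car B) \<theta> \<and>
     (\<forall>a b c d. (a, b) \<in> \<theta> \<and> (c, d) \<in> \<theta> \<longrightarrow>
        (join B a c, join B b d) \<in> \<theta> \<and> (meet B a c, meet B b d) \<in> \<theta>)"

definition Con_BI :: "'a bilat \<Rightarrow> ('a \<times> 'a) set set" where
  "Con_BI B = {\<theta>. lat_cong B \<theta> \<and> (\<forall>a b. (a, b) \<in> \<theta> \<longrightarrow> (inv B a, inv B b) \<in> \<theta>)}"

definition Con_BI01 :: "'a bilat \<Rightarrow> ('a \<times> 'a) set set" where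
  "Con_BI01 B = {\<theta> \<in> Con_BI B. \<theta> `` {bot B} = {bot B} \<and> \<theta> `` {top B} = {top B}}"

definition nabla :: "'a bilat \<Rightarrow> ('a \<times> 'a) set" where
  "nabla B = car B \<times> car B"

definition eq_of :: "'a set set \<Rightarrow> ('a \<times> 'a) set" where
  "eq_of \<pi> = {(x, y). \<exists>C\<in>\<pi>. x \<in> C \<and> y \<in> C}"

datatype 'a hs = HBot | HTop | HEl nat 'a

definition hsum :: "nat \<Rightarrow> (nat \<Rightarrow> 'a bilat) \<Rightarrow> 'a hs bilat" where
  "hsum t Ks = \<lparr> car = {HBot, HTop} \<union>
        {HEl i x | i x. i \<in> {1..t} \<and> x \<in> car (Ks i) \<and> x \<noteq> bot (Ks i) \<and> x \<noteq> top (Ks i)},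
      le = (\<lambda>u v. u = HBot \<or> v = HTop \<or>
              (\<exists>i x y. u = HEl i x \<and> v = HEl i y \<and> le (Ks i) x y)),
      inv = (\<lambda>u. case u of HBot \<Rightarrow> HTop | HTop \<Rightarrow> HBot | HEl i x \<Rightarrow> HEl i (inv (Ks i) x)) \<rparr>"

definition hsum_cong :: "nat \<Rightarrow> (nat \<Rightarrow> 'a bilat) \<Rightarrow> (nat \<Rightarrow> ('a \<times> 'a) set) \<Rightarrow> ('a hs \<times> 'a hs) set" where
  "hsum_cong t Ks \<alpha>s = eq_of (
      {{HBot} \<union> (\<Union>i\<in>{1..t}. HEl i ` (\<alpha>s i `` {bot (Ks i)} - {bot (Ks i)})),
       {HTop} \<union> (\<Union>i\<in>{1..t}. HEl i ` (\<alpha>s i `` {top (Ks i)} - {top (Ks i)}))}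
      \<union> (\<Union>i\<in>{1..t}. (\<lambda>C. HEl i ` C) `
            ((car (Ks i) // \<alpha>s i) - {\<alpha>s i `` {bot (Ks i)}, \<alpha>s i `` {top (Ks i)}})))"

section \<open>L_2 + M + L_2 (new bottom and top)\<close>

datatype 'a ext = EBot | ETop | EIn 'a

definition ext_bl :: "'a bilat \<Rightarrow> 'a ext bilat" where
  "ext_bl M = \<lparr> car = {EBot, ETop} \<union> EIn ` car M,
      le = (\<lambda>u v. u = EBot \<or> v = ETop \<or> (\<exists>x y. u = EIn x \<and> v = EIn y \<and> le M x y)),
      inv = (\<lambda>u. case u of EBot \<Rightarrow> ETop | ETop \<Rightarrow> EBot | EIn x \<Rightarrow> EIn (inv M x)) \<rparr>"

definition order_iso :: "'a set \<Rightarrow> ('a \<Rightarrow> 'a \<Rightarrow> bool) \<Rightarrow> 'b set \<Rightarrow> ('b \<Rightarrow> 'b \<Rightarrow> bool) \<Rightarrow> bool" where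
  "order_iso A leA B leB \<longleftrightarrow> (\<exists>h. bij_betw h A B \<and>
     (\<forall>x\<in>A. \<forall>y\<in>A. leA x y \<longleftrightarrow> leB (h x) (h y)))"

text \<open>(prod_{i=1}^t C_i) + L_2: the product (componentwise inclusion) with a new top None.\<close>
definition prod_plus_carrier :: "nat \<Rightarrow> (nat \<Rightarrow> 'r set set) \<Rightarrow> (nat \<Rightarrow> 'r set) option set" where
  "prod_plus_carrier t Cs = Some ` (PiE {1..t} Cs) \<union> {None}"

definition prod_plus_le :: "nat \<Rightarrow> (nat \<Rightarrow> 'r set) option \<Rightarrow> (nat \<Rightarrow> 'r set) option \<Rightarrow> bool" where
  "prod_plus_le t a b \<longleftrightarrow> b = None \<or>
     (\<exists>f g. a = Some f \<and> b = Some g \<and> (\<forall>i\<in>{1..t}. f i \<subseteq> g i))"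

end

theory Submission
  imports Defs
begin

text \<open>
  A congruence \<open>\<theta> \<noteq> \<nabla>\<close> of the horizontal sum \<open>K\<close> of \<open>t \<ge> 2\<close> bi-lattices with more than
  two elements has singleton classes \<open>{0}\<close> and \<open>{1}\<close>: if \<open>0 \<theta> u\<close> with \<open>u \<noteq> 0\<close> in a summand
  \<open>K\<^sub>i\<close>, joining with an element \<open>y \<notin> {0, 1}\<close> of another summand gives \<open>y \<theta> 1\<close>, and meeting
  that with \<open>u'\<close> (where \<open>1 \<theta> u'\<close>) gives \<open>0 \<theta> 1\<close>, which collapses \<open>K\<close>. Likewise no element of
  \<open>K\<^sub>i - {0, 1}\<close> is related to an element of another summand. So \<open>\<theta>\<close> is glued from its
  restrictions to the summands, which lie in \<open>Con\<^sub>B\<^sub>I\<^sub>0\<^sub>1(K\<^sub>i)\<close>; conversely every such family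
  glues to a congruence, and gluing is an order embedding with image strictly below \<open>\<nabla>\<close>.
  For part (2), \<open>Con\<^sub>B\<^sub>I\<^sub>0\<^sub>1(L\<^sub>2 \<oplus> M \<oplus> L\<^sub>2)\<close> consists exactly of the congruences of \<open>M\<close>
  extended by the classes \<open>{0}\<close> and \<open>{1}\<close>.
\<close>

lemma join_eqI:
  assumes "is_lub B x y z"
    and "\<And>a b. a \<in> car B \<Longrightarrow> b \<in> car B \<Longrightarrow> le B a b \<Longrightarrow> le B b a \<Longrightarrow> a = b"
  shows "join B x y = z"
  unfolding join_def using assms by (intro the_equality) (auto simp: is_lub_def)

lemma meet_eqI:
  assumes "is_glb B x y z"
    and "\<And>a b. a \<in> car B \<Longrightarrow> b \<in> car B \<Longrightarrow> le B a b \<Longrightarrow> le B b a \<Longrightarrow> a = b"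
  shows "meet B x y = z"
  unfolding meet_def using assms by (intro the_equality) (auto simp: is_glb_def)

locale bilattice =
  fixes B :: "'a bilat"
  assumes bi_lattice: "bi_lattice B"
begin

lemma le_refl: "x \<in> car B \<Longrightarrow> le B x x"
  and le_antisym: "x \<in> car B \<Longrightarrow> y \<in> car B \<Longrightarrow> le B x y \<Longrightarrow> le B y x \<Longrightarrow> x = y"
  and le_trans: "x \<in> car B \<Longrightarrow> y \<in> car B \<Longrightarrow> z \<in> car B \<Longrightarrow> le B x y \<Longrightarrow> le B y z \<Longrightarrow> le B x z"
  and lub_exists: "x \<in> car B \<Longrightarrow> y \<in> car B \<Longrightarrow> \<exists>z. is_lub B x y z"
  and glb_exists: "x \<in> car B \<Longrightarrow> y \<in> car B \<Longrightarrow> \<exists>z. is_glb B x y z"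
  and least_exists: "\<exists>z\<in>car B. \<forall>x\<in>car B. le B z x"
  and greatest_exists: "\<exists>z\<in>car B. \<forall>x\<in>car B. le B x z"
  and inv_closed: "x \<in> car B \<Longrightarrow> inv B x \<in> car B"
  and inv_inv: "x \<in> car B \<Longrightarrow> inv B (inv B x) = x"
  and inv_antimono: "x \<in> car B \<Longrightarrow> y \<in> car B \<Longrightarrow> le B x y \<Longrightarrow> le B (inv B y) (inv B x)"
  using bi_lattice unfolding bi_lattice_def bounded_lattice_on_def by blast+

lemma join_unique: "is_lub B x y z \<Longrightarrow> join B x y = z"
  by (rule join_eqI[OF _ le_antisym])

lemma meet_unique: "is_glb B x y z \<Longrightarrow> meet B x y = z"
  by (rule meet_eqI[OF _ le_antisym])

lemma join_is_lub: "x \<in> car B \<Longrightarrow> y \<in> car B \<Longrightarrow> is_lub B x y (join B x y)"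
  using lub_exists join_unique by metis

lemma meet_is_glb: "x \<in> car B \<Longrightarrow> y \<in> car B \<Longrightarrow> is_glb B x y (meet B x y)"
  using glb_exists meet_unique by metis

lemma join_closed: "x \<in> car B \<Longrightarrow> y \<in> car B \<Longrightarrow> join B x y \<in> car B"
  using join_is_lub by (simp add: is_lub_def)

lemma meet_closed: "x \<in> car B \<Longrightarrow> y \<in> car B \<Longrightarrow> meet B x y \<in> car B"
  using meet_is_glb by (simp add: is_glb_def)

lemma bot_least: "bot B \<in> car B \<and> (\<forall>x\<in>car B. le B (bot B) x)"
proof -
  obtain z where "z \<in> car B" "\<forall>x\<in>car B. le B z x" using least_exists by blast
  moreover from this have "bot B = z"
    unfolding bot_def by (intro the_equality) (auto intro: le_antisym)
  ultimately show ?thesis by simp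
qed

lemma top_greatest: "top B \<in> car B \<and> (\<forall>x\<in>car B. le B x (top B))"
proof -
  obtain z where "z \<in> car B" "\<forall>x\<in>car B. le B x z" using greatest_exists by blast
  moreover from this have "top B = z"
    unfolding top_def by (intro the_equality) (auto intro: le_antisym)
  ultimately show ?thesis by simp
qed

lemma bot_closed: "bot B \<in> car B"
  and top_closed: "top B \<in> car B"
  and bot_le: "x \<in> car B \<Longrightarrow> le B (bot B) x"
  and le_top: "x \<in> car B \<Longrightarrow> le B x (top B)"
  using bot_least top_greatest by auto

lemma le_bot_iff: "x \<in> car B \<Longrightarrow> le B x (bot B) \<longleftrightarrow> x = bot B"
  using le_antisym bot_closed bot_le le_refl by blast

lemma top_le_iff: "x \<in> car B \<Longrightarrow> le B (top B) x \<longleftrightarrow> x = top B"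
  using le_antisym top_closed le_top le_refl by blast

lemma inv_bot: "inv B (bot B) = top B"
proof -
  have "le B y (inv B (bot B))" if "y \<in> car B" for y
    using inv_antimono[OF bot_closed inv_closed bot_le] inv_closed inv_inv that by metis
  then show ?thesis
    using inv_closed[OF bot_closed] le_antisym le_top top_closed by blast
qed

lemma inv_top: "inv B (top B) = bot B"
  using inv_bot inv_inv bot_closed by metis

lemma inv_eq_bot_iff: "x \<in> car B \<Longrightarrow> inv B x = bot B \<longleftrightarrow> x = top B"
  and inv_eq_top_iff: "x \<in> car B \<Longrightarrow> inv B x = top B \<longleftrightarrow> x = bot B"
  using inv_top inv_bot inv_inv by metis+

lemma join_eq_bot_iff: "x \<in> car B \<Longrightarrow> y \<in> car B \<Longrightarrow> join B x y = bot B \<longleftrightarrow> x = bot B \<and> y = bot B"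
  using join_is_lub le_bot_iff bot_closed unfolding is_lub_def by metis

lemma meet_eq_top_iff: "x \<in> car B \<Longrightarrow> y \<in> car B \<Longrightarrow> meet B x y = top B \<longleftrightarrow> x = top B \<and> y = top B"
  using meet_is_glb top_le_iff top_closed unfolding is_glb_def by metis

lemma join_bot_left: "x \<in> car B \<Longrightarrow> join B (bot B) x = x"
  and join_bot_right: "x \<in> car B \<Longrightarrow> join B x (bot B) = x"
  by (auto intro!: join_unique simp: is_lub_def bot_le le_refl bot_closed)

lemma meet_top_left: "x \<in> car B \<Longrightarrow> meet B (top B) x = x"
  and meet_top_right: "x \<in> car B \<Longrightarrow> meet B x (top B) = x"
  and meet_bot_right: "x \<in> car B \<Longrightarrow> meet B x (bot B) = bot B"
  and meet_idem: "x \<in> car B \<Longrightarrow> meet B x x = x"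
  by (auto intro!: meet_unique simp: is_glb_def bot_le le_top le_refl bot_closed top_closed)

end

lemma Con_BI_iff:
  "\<theta> \<in> Con_BI B \<longleftrightarrow> equiv (car B) \<theta> \<and>
     (\<forall>a b c d. (a, b) \<in> \<theta> \<and> (c, d) \<in> \<theta> \<longrightarrow>
        (join B a c, join B b d) \<in> \<theta> \<and> (meet B a c, meet B b d) \<in> \<theta>) \<and>
     (\<forall>a b. (a, b) \<in> \<theta> \<longrightarrow> (inv B a, inv B b) \<in> \<theta>)"
  by (simp add: Con_BI_def lat_cong_def)

lemma Con_BI_equivI:
  assumes "equiv (car B) \<theta>"
    and "\<And>a b c d. (a, b) \<in> \<theta> \<Longrightarrow> (c, d) \<in> \<theta> \<Longrightarrow> (join B a c, join B b d) \<in> \<theta>"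
    and "\<And>a b c d. (a, b) \<in> \<theta> \<Longrightarrow> (c, d) \<in> \<theta> \<Longrightarrow> (meet B a c, meet B b d) \<in> \<theta>"
    and "\<And>a b. (a, b) \<in> \<theta> \<Longrightarrow> (inv B a, inv B b) \<in> \<theta>"
  shows "\<theta> \<in> Con_BI B"
  unfolding Con_BI_iff using assms by blast

lemma Con_BI_I:
  assumes "\<theta> \<subseteq> car B \<times> car B"
    and "\<And>x. x \<in> car B \<Longrightarrow> (x, x) \<in> \<theta>"
    and "\<And>x y. (x, y) \<in> \<theta> \<Longrightarrow> (y, x) \<in> \<theta>"
    and "\<And>x y z. (x, y) \<in> \<theta> \<Longrightarrow> (y, z) \<in> \<theta> \<Longrightarrow> (x, z) \<in> \<theta>"
    and "\<And>a b c d. (a, b) \<in> \<theta> \<Longrightarrow> (c, d) \<in> \<theta> \<Longrightarrow> (join B a c, join B b d) \<in> \<theta>"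
    and "\<And>a b c d. (a, b) \<in> \<theta> \<Longrightarrow> (c, d) \<in> \<theta> \<Longrightarrow> (meet B a c, meet B b d) \<in> \<theta>"
    and "\<And>a b. (a, b) \<in> \<theta> \<Longrightarrow> (inv B a, inv B b) \<in> \<theta>"
  shows "\<theta> \<in> Con_BI B"
proof -
  have "equiv (car B) \<theta>"
  proof (rule equivI)
    show "refl_on (car B) \<theta>" by (rule refl_onI) (rule assms(2))
    show "sym \<theta>" by (rule symI) (rule assms(3))
    show "trans \<theta>" by (rule transI) (rule assms(4))
  qed (rule assms(1))
  then show ?thesis using assms(5-7) by (rule Con_BI_equivI)
qed

lemma Con_BI_D:
  assumes "\<theta> \<in> Con_BI B"
  shows Con_BI_subset: "\<theta> \<subseteq> car B \<times> car B"
    and Con_BI_refl: "\<And>x. x \<in> car B \<Longrightarrow> (x, x) \<in> \<theta>"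
    and Con_BI_sym: "\<And>x y. (x, y) \<in> \<theta> \<Longrightarrow> (y, x) \<in> \<theta>"
    and Con_BI_trans: "\<And>x y z. (x, y) \<in> \<theta> \<Longrightarrow> (y, z) \<in> \<theta> \<Longrightarrow> (x, z) \<in> \<theta>"
    and Con_BI_join: "\<And>a b c d. (a, b) \<in> \<theta> \<Longrightarrow> (c, d) \<in> \<theta> \<Longrightarrow> (join B a c, join B b d) \<in> \<theta>"
    and Con_BI_meet: "\<And>a b c d. (a, b) \<in> \<theta> \<Longrightarrow> (c, d) \<in> \<theta> \<Longrightarrow> (meet B a c, meet B b d) \<in> \<theta>"
    and Con_BI_inv: "\<And>a b. (a, b) \<in> \<theta> \<Longrightarrow> (inv B a, inv B b) \<in> \<theta>"
proof -
  have "equiv (car B) \<theta>" using assms by (simp add: Con_BI_iff)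
  then obtain "\<theta> \<subseteq> car B \<times> car B" "refl_on (car B) \<theta>" "sym \<theta>" "trans \<theta>"
    by (rule equivE)
  then show "\<theta> \<subseteq> car B \<times> car B" "\<And>x. x \<in> car B \<Longrightarrow> (x, x) \<in> \<theta>"
    "\<And>x y. (x, y) \<in> \<theta> \<Longrightarrow> (y, x) \<in> \<theta>"
    "\<And>x y z. (x, y) \<in> \<theta> \<Longrightarrow> (y, z) \<in> \<theta> \<Longrightarrow> (x, z) \<in> \<theta>"
    by (auto dest: refl_onD symD transD)
qed (use assms in \<open>simp_all add: Con_BI_iff\<close>)

lemma Con_BI_equiv: "\<theta> \<in> Con_BI B \<Longrightarrow> equiv (car B) \<theta>"
  by (simp add: Con_BI_iff)

lemma Con_BI01_Con_BI: "\<alpha> \<in> Con_BI01 B \<Longrightarrow> \<alpha> \<in> Con_BI B"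
  by (simp add: Con_BI01_def)

lemma Con_BI01_bot_top:
  assumes "\<alpha> \<in> Con_BI01 B" and "(x, y) \<in> \<alpha>"
  shows "(x = bot B \<longleftrightarrow> y = bot B) \<and> (x = top B \<longleftrightarrow> y = top B)"
  using assms Con_BI_sym[OF Con_BI01_Con_BI[OF assms(1)]] unfolding Con_BI01_def by blast

lemma Con_BI01_class_cases:
  assumes \<alpha>: "\<alpha> \<in> Con_BI01 B" and C: "C \<in> car B // \<alpha>"
  shows "C = {bot B} \<or> C = {top B} \<or> (bot B \<notin> C \<and> top B \<notin> C)"
proof -
  obtain x where x: "C = \<alpha> `` {x}" using C by (rule quotientE)
  have bot_class: "\<alpha> `` {bot B} = {bot B}" and top_class: "\<alpha> `` {top B} = {top B}"
    using \<alpha> by (simp_all add: Con_BI01_def)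
  consider "x = bot B" | "x = top B" | "x \<noteq> bot B" "x \<noteq> top B" by blast
  then show ?thesis
  proof cases
    case 3
    then have "bot B \<notin> C" "top B \<notin> C" using x Con_BI01_bot_top[OF \<alpha>] by auto
    then show ?thesis by blast
  qed (use x bot_class top_class in simp_all)
qed

lemma nabla_Con_BI:
  assumes "\<And>x y. x \<in> car B \<Longrightarrow> y \<in> car B \<Longrightarrow> join B x y \<in> car B"
    and "\<And>x y. x \<in> car B \<Longrightarrow> y \<in> car B \<Longrightarrow> meet B x y \<in> car B"
    and "\<And>x. x \<in> car B \<Longrightarrow> inv B x \<in> car B"
  shows "nabla B \<in> Con_BI B"
  using assms by (intro Con_BI_I) (auto simp: nabla_def)

lemma mem_eq_of_iff: "(u, v) \<in> eq_of \<pi> \<longleftrightarrow> (\<exists>C\<in>\<pi>. u \<in> C \<and> v \<in> C)"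
  by (simp add: eq_of_def)

section \<open>Products with a new top element\<close>

lemma order_isoI_inv:
  assumes "bij_betw g B A" and "\<And>x y. x \<in> B \<Longrightarrow> y \<in> B \<Longrightarrow> leB x y \<longleftrightarrow> leA (g x) (g y)"
  shows "order_iso A leA B leB"
proof -
  let ?h = "inv_into B g"
  have "leA x y \<longleftrightarrow> leB (?h x) (?h y)" if "x \<in> A" "y \<in> A" for x y
    using assms(2)[of "?h x" "?h y"] that bij_betw_inv_into_right[OF assms(1)]
      bij_betwE[OF bij_betw_inv_into[OF assms(1)]] by simp
  then show ?thesis
    unfolding order_iso_def using bij_betw_inv_into[OF assms(1)] by blast
qed

lemma prod_plus_le_antisym:
  assumes "x \<in> prod_plus_carrier t Cs" "y \<in> prod_plus_carrier t Cs"
    and "prod_plus_le t x y" "prod_plus_le t y x"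
  shows "x = y"
proof (cases "x = None \<or> y = None")
  case True
  then show ?thesis using assms(3,4) by (auto simp: prod_plus_le_def)
next
  case False
  then obtain f g where "x = Some f" "y = Some g" "f \<in> PiE {1..t} Cs" "g \<in> PiE {1..t} Cs"
    using assms(1,2) by (auto simp: prod_plus_carrier_def)
  moreover from this have "\<forall>i\<in>{1..t}. f i = g i"
    using assms(3,4) by (auto simp: prod_plus_le_def)
  ultimately show ?thesis using PiE_ext[of f "{1..t}" Cs g] by simp
qed

lemma prod_plus_le_iff_subset:
  assumes mono: "\<And>a b. a \<in> PiE {1..t} Cs \<Longrightarrow> b \<in> PiE {1..t} Cs \<Longrightarrow>
      F a \<subseteq> F b \<longleftrightarrow> (\<forall>i\<in>{1..t}. a i \<subseteq> b i)"
    and below_top: "\<And>a. a \<in> PiE {1..t} Cs \<Longrightarrow> F a \<subset> N"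
    and x: "x \<in> prod_plus_carrier t Cs" and y: "y \<in> prod_plus_carrier t Cs"
  shows "prod_plus_le t x y \<longleftrightarrow> case_option N F x \<subseteq> case_option N F y"
proof (cases y)
  case None
  have "case_option N F x \<subseteq> N"
  proof (cases x)
    case (Some a)
    then have "a \<in> PiE {1..t} Cs" using x by (auto simp: prod_plus_carrier_def)
    then show ?thesis using below_top Some by auto
  qed simp
  then show ?thesis using None by (simp add: prod_plus_le_def)
next
  case (Some b)
  then have b: "b \<in> PiE {1..t} Cs" using y by (auto simp: prod_plus_carrier_def)
  show ?thesis
  proof (cases x)
    case None
    have "\<not> N \<subseteq> F b" using below_top[OF b] by blast
    then show ?thesis using None Some by (simp add: prod_plus_le_def)
  next
    case (Some a)
    then have "a \<in> PiE {1..t} Cs" using x by (auto simp: prod_plus_carrier_def)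
    then show ?thesis using mono[OF _ b] Some \<open>y = Some b\<close> by (simp add: prod_plus_le_def)
  qed
qed

lemma order_iso_prod_plus:
  assumes C: "C = F ` PiE {1..t} Cs \<union> {N}"
    and mono: "\<And>a b. a \<in> PiE {1..t} Cs \<Longrightarrow> b \<in> PiE {1..t} Cs \<Longrightarrow>
      F a \<subseteq> F b \<longleftrightarrow> (\<forall>i\<in>{1..t}. a i \<subseteq> b i)"
    and below_top: "\<And>a. a \<in> PiE {1..t} Cs \<Longrightarrow> F a \<subset> N"
  shows "order_iso C (\<subseteq>) (prod_plus_carrier t Cs) (prod_plus_le t)"
proof (rule order_isoI_inv)
  show le_iff: "prod_plus_le t x y \<longleftrightarrow> case_option N F x \<subseteq> case_option N F y"
    if "x \<in> prod_plus_carrier t Cs" "y \<in> prod_plus_carrier t Cs" for x y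
    using mono below_top that by (rule prod_plus_le_iff_subset)
  have "inj_on (case_option N F) (prod_plus_carrier t Cs)"
  proof (rule inj_onI)
    fix x y assume xy: "x \<in> prod_plus_carrier t Cs" "y \<in> prod_plus_carrier t Cs"
      and "case_option N F x = case_option N F y"
    then have "prod_plus_le t x y" "prod_plus_le t y x" using le_iff by simp_all
    then show "x = y" using prod_plus_le_antisym[OF xy] by simp
  qed
  moreover have "case_option N F ` prod_plus_carrier t Cs = C"
    unfolding C by (auto simp: prod_plus_carrier_def image_image)
  ultimately show "bij_betw (case_option N F) (prod_plus_carrier t Cs) C"
    by (simp add: bij_betw_def)
qed

section \<open>Horizontal sums\<close>

lemma le_hsum:
  "le (hsum t Ms) u v \<longleftrightarrow> u = HBot \<or> v = HTop \<or>
     (\<exists>i x y. u = HEl i x \<and> v = HEl i y \<and> le (Ms i) x y)"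
  by (simp add: hsum_def)

lemma car_hsum:
  "car (hsum t Ms) = {HBot, HTop} \<union>
     {HEl i x | i x. i \<in> {1..t} \<and> x \<in> car (Ms i) \<and> x \<noteq> bot (Ms i) \<and> x \<noteq> top (Ms i)}"
  by (simp add: hsum_def)

lemma inv_hsum:
  "inv (hsum t Ms) u = (case u of HBot \<Rightarrow> HTop | HTop \<Rightarrow> HBot | HEl i x \<Rightarrow> HEl i (inv (Ms i) x))"
  by (simp add: hsum_def)

definition hsum_emb :: "(nat \<Rightarrow> 'a bilat) \<Rightarrow> nat \<Rightarrow> 'a \<Rightarrow> 'a hs" where
  "hsum_emb Ms i x = (if x = bot (Ms i) then HBot else if x = top (Ms i) then HTop else HEl i x)"

definition restrict_cong :: "(nat \<Rightarrow> 'a bilat) \<Rightarrow> nat \<Rightarrow> ('a hs \<times> 'a hs) set \<Rightarrow> ('a \<times> 'a) set" where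
  "restrict_cong Ms i \<theta> =
     {(x, y). x \<in> car (Ms i) \<and> y \<in> car (Ms i) \<and> (hsum_emb Ms i x, hsum_emb Ms i y) \<in> \<theta>}"

text \<open>The relation \<open>\<boxplus>\<^sub>i \<alpha>\<^sub>i\<close> given by its pairs rather than by its classes as in
  \<^const>\<open>hsum_cong\<close>; the two agree on families of congruences in \<^const>\<open>Con_BI01\<close>.\<close>

definition boxplus_cong ::
  "nat \<Rightarrow> (nat \<Rightarrow> 'a bilat) \<Rightarrow> (nat \<Rightarrow> ('a \<times> 'a) set) \<Rightarrow> ('a hs \<times> 'a hs) set" where
  "boxplus_cong t Ms \<alpha> = {(hsum_emb Ms i x, hsum_emb Ms i y) | i x y. i \<in> {1..t} \<and> (x, y) \<in> \<alpha> i}"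

lemma boxplus_cong_iff:
  "p \<in> boxplus_cong t Ms \<alpha> \<longleftrightarrow>
     (\<exists>i x y. i \<in> {1..t} \<and> (x, y) \<in> \<alpha> i \<and> p = (hsum_emb Ms i x, hsum_emb Ms i y))"
  by (auto simp: boxplus_cong_def)

lemma boxplus_cong_cong:
  "(\<And>i. i \<in> {1..t} \<Longrightarrow> \<alpha> i = \<beta> i) \<Longrightarrow> boxplus_cong t Ms \<alpha> = boxplus_cong t Ms \<beta>"
  unfolding boxplus_cong_def by blast

lemma boxplus_cong_Setcompr_eq_image:
  assumes G: "\<forall>i\<in>{1..t}. Cs i = G i ` P i"
  shows "{boxplus_cong t Ms \<alpha> | \<alpha>. \<forall>i\<in>{1..t}. \<alpha> i \<in> Cs i} =
    (\<lambda>\<beta>. boxplus_cong t Ms (\<lambda>i. G i (\<beta> i))) ` PiE {1..t} P"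
proof (intro equalityI subsetI)
  fix \<theta> assume "\<theta> \<in> {boxplus_cong t Ms \<alpha> | \<alpha>. \<forall>i\<in>{1..t}. \<alpha> i \<in> Cs i}"
  then obtain \<alpha> where "\<forall>i\<in>{1..t}. \<alpha> i \<in> Cs i" and \<theta>: "\<theta> = boxplus_cong t Ms \<alpha>"
    by blast
  then have \<alpha>: "\<forall>i\<in>{1..t}. \<alpha> i \<in> G i ` P i" using G by simp
  define \<beta> where "\<beta> = restrict (\<lambda>i. SOME b. b \<in> P i \<and> G i b = \<alpha> i) {1..t}"
  have \<beta>: "\<beta> i \<in> P i \<and> G i (\<beta> i) = \<alpha> i" if "i \<in> {1..t}" for i
  proof -
    have "\<exists>b. b \<in> P i \<and> G i b = \<alpha> i" using \<alpha> that by blast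
    from someI_ex[OF this] show ?thesis using that unfolding \<beta>_def by simp
  qed
  then have "\<beta> \<in> PiE {1..t} P" unfolding \<beta>_def restrict_PiE_iff by simp
  moreover have "boxplus_cong t Ms (\<lambda>i. G i (\<beta> i)) = \<theta>"
    unfolding \<theta> by (rule boxplus_cong_cong) (use \<beta> in blast)
  ultimately show "\<theta> \<in> (\<lambda>\<beta>. boxplus_cong t Ms (\<lambda>i. G i (\<beta> i))) ` PiE {1..t} P" by blast
next
  fix \<theta> assume "\<theta> \<in> (\<lambda>\<beta>. boxplus_cong t Ms (\<lambda>i. G i (\<beta> i))) ` PiE {1..t} P"
  then obtain \<beta> where \<beta>: "\<beta> \<in> PiE {1..t} P" "\<theta> = boxplus_cong t Ms (\<lambda>i. G i (\<beta> i))" by blast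
  have "\<forall>i\<in>{1..t}. G i (\<beta> i) \<in> Cs i" using \<beta>(1) G by (auto simp: PiE_iff)
  then show "\<theta> \<in> {boxplus_cong t Ms \<alpha> | \<alpha>. \<forall>i\<in>{1..t}. \<alpha> i \<in> Cs i}" using \<beta>(2) by blast
qed

lemma boxplus_cong_eq_of:
  assumes \<alpha>: "\<And>i. i \<in> {1..t} \<Longrightarrow> equiv (car (Ms i)) (\<alpha> i)"
  shows "boxplus_cong t Ms \<alpha> = eq_of (\<Union>i\<in>{1..t}. (\<lambda>C. hsum_emb Ms i ` C) ` (car (Ms i) // \<alpha> i))"
    (is "_ = eq_of ?\<pi>")
proof (intro equalityI subsetI)
  fix p assume "p \<in> boxplus_cong t Ms \<alpha>"
  then obtain i x y where i: "i \<in> {1..t}" "(x, y) \<in> \<alpha> i" "p = (hsum_emb Ms i x, hsum_emb Ms i y)"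
    unfolding boxplus_cong_iff by blast
  have x: "x \<in> car (Ms i)" using equiv_type[OF \<alpha>[OF i(1)]] i(2) by blast
  have "\<alpha> i `` {x} \<in> car (Ms i) // \<alpha> i" using x by (rule quotientI)
  then have "hsum_emb Ms i ` (\<alpha> i `` {x}) \<in> ?\<pi>" using i(1) by blast
  moreover have "x \<in> \<alpha> i `` {x}" "y \<in> \<alpha> i `` {x}"
    using equiv_class_self[OF \<alpha>[OF i(1)] x] i(2) by auto
  ultimately show "p \<in> eq_of ?\<pi>"
    unfolding i(3) mem_eq_of_iff by blast
next
  fix p assume p: "p \<in> eq_of ?\<pi>"
  obtain u v where uv: "p = (u, v)" by (cases p)
  then have "(u, v) \<in> eq_of ?\<pi>" using p by simp
  then obtain D where D: "D \<in> ?\<pi>" "u \<in> D" "v \<in> D"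
    unfolding mem_eq_of_iff by blast
  then obtain i C where i: "i \<in> {1..t}" "C \<in> car (Ms i) // \<alpha> i" "D = hsum_emb Ms i ` C"
    by blast
  then obtain x y where xy: "x \<in> C" "y \<in> C" "u = hsum_emb Ms i x" "v = hsum_emb Ms i y"
    using D(2,3) by blast
  then have "(x, y) \<in> \<alpha> i" using in_quotient_imp_in_rel[OF \<alpha>[OF i(1)] i(2)] by blast
  then show "p \<in> boxplus_cong t Ms \<alpha>" using i(1) uv xy unfolding boxplus_cong_iff by blast
qed

lemma hsum_cong_eq_of_interior_classes:
  assumes \<alpha>: "\<And>i. i \<in> {1..t} \<Longrightarrow> \<alpha> i \<in> Con_BI01 (Ms i)"
  shows "hsum_cong t Ms \<alpha> = eq_of ({{HBot}, {HTop}} \<union>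
      (\<Union>i\<in>{1..t}. (\<lambda>C. HEl i ` C) ` (car (Ms i) // \<alpha> i - {{bot (Ms i)}, {top (Ms i)}})))"
proof -
  have bot_class: "\<alpha> i `` {bot (Ms i)} = {bot (Ms i)}"
    and top_class: "\<alpha> i `` {top (Ms i)} = {top (Ms i)}" if "i \<in> {1..t}" for i
    using \<alpha>[OF that] by (simp_all add: Con_BI01_def)
  have no_bot: "(\<Union>i\<in>{1..t}. HEl i ` (\<alpha> i `` {bot (Ms i)} - {bot (Ms i)})) = {}"
    and no_top: "(\<Union>i\<in>{1..t}. HEl i ` (\<alpha> i `` {top (Ms i)} - {top (Ms i)})) = {}"
    using bot_class top_class by auto
  have classes: "(\<Union>i\<in>{1..t}. (\<lambda>C. HEl i ` C) `
      (car (Ms i) // \<alpha> i - {\<alpha> i `` {bot (Ms i)}, \<alpha> i `` {top (Ms i)}})) =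
    (\<Union>i\<in>{1..t}. (\<lambda>C. HEl i ` C) ` (car (Ms i) // \<alpha> i - {{bot (Ms i)}, {top (Ms i)}}))"
    by (rule SUP_cong) (simp_all add: bot_class top_class)
  show ?thesis unfolding hsum_cong_def no_bot no_top classes by simp
qed

locale horizontal_sum =
  fixes t :: nat and Ms :: "nat \<Rightarrow> 'a bilat"
  assumes two_le_t: "2 \<le> t"
    and summand_bi_lattice: "i \<in> {1..t} \<Longrightarrow> bi_lattice (Ms i)"
    and summand_nontrivial: "i \<in> {1..t} \<Longrightarrow> \<exists>x\<in>car (Ms i). x \<noteq> bot (Ms i) \<and> x \<noteq> top (Ms i)"
begin

abbreviation K :: "'a hs bilat" where "K \<equiv> hsum t Ms"

lemma summand_bilattice: "i \<in> {1..t} \<Longrightarrow> bilattice (Ms i)"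
  by (simp add: bilattice_def summand_bi_lattice)

lemma summand_bot_ne_top: "i \<in> {1..t} \<Longrightarrow> bot (Ms i) \<noteq> top (Ms i)"
  using summand_nontrivial bilattice.le_top[OF summand_bilattice] bilattice.le_bot_iff[OF summand_bilattice]
  by metis

lemma HBot_closed: "HBot \<in> car K"
  and HTop_closed: "HTop \<in> car K"
  and HBot_le: "le K HBot u"
  and le_HTop: "le K u HTop"
  by (simp_all add: car_hsum le_hsum)

lemma emb_closed: "i \<in> {1..t} \<Longrightarrow> x \<in> car (Ms i) \<Longrightarrow> hsum_emb Ms i x \<in> car K"
  by (auto simp: hsum_emb_def car_hsum)

lemma emb_bot: "hsum_emb Ms i (bot (Ms i)) = HBot"
  by (simp add: hsum_emb_def)

lemma emb_top: "i \<in> {1..t} \<Longrightarrow> hsum_emb Ms i (top (Ms i)) = HTop"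
  using summand_bot_ne_top[of i] by (auto simp: hsum_emb_def)

lemma emb_eq_HBot_iff: "i \<in> {1..t} \<Longrightarrow> hsum_emb Ms i x = HBot \<longleftrightarrow> x = bot (Ms i)"
  and emb_eq_HTop_iff: "i \<in> {1..t} \<Longrightarrow> hsum_emb Ms i x = HTop \<longleftrightarrow> x = top (Ms i)"
  using summand_bot_ne_top by (auto simp: hsum_emb_def)

lemma emb_eq_HEl: "x \<noteq> bot (Ms i) \<Longrightarrow> x \<noteq> top (Ms i) \<Longrightarrow> hsum_emb Ms i x = HEl i x"
  by (simp add: hsum_emb_def)

lemma emb_eq_emb_iff:
  assumes "i \<in> {1..t}" "j \<in> {1..t}"
  shows "hsum_emb Ms i x = hsum_emb Ms j y \<longleftrightarrow>
     (x = bot (Ms i) \<and> y = bot (Ms j)) \<or> (x = top (Ms i) \<and> y = top (Ms j)) \<or> (i = j \<and> x = y)"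
  using summand_bot_ne_top[OF assms(1)] summand_bot_ne_top[OF assms(2)] by (auto simp: hsum_emb_def)

lemma hsum_elem_cases:
  assumes "u \<in> car K"
  obtains i x where "i \<in> {1..t}" "x \<in> car (Ms i)" "u = hsum_emb Ms i x"
proof -
  have one: "1 \<in> {1..t}" using two_le_t by simp
  interpret M: bilattice "Ms 1" using summand_bilattice[OF one] .
  show ?thesis
  proof (cases u)
    case HBot then show ?thesis using that[OF one M.bot_closed] emb_bot by simp
  next
    case HTop then show ?thesis using that[OF one M.top_closed] emb_top[OF one] by simp
  next
    case (HEl i x) then show ?thesis using that assms emb_eq_HEl by (auto simp: car_hsum)
  qed
qed

lemma le_emb_iff:
  assumes i: "i \<in> {1..t}" and j: "j \<in> {1..t}" and x: "x \<in> car (Ms i)" and y: "y \<in> car (Ms j)"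
  shows "le K (hsum_emb Ms i x) (hsum_emb Ms j y) \<longleftrightarrow>
     (if i = j then le (Ms i) x y else x = bot (Ms i) \<or> y = top (Ms j))"
proof -
  interpret I: bilattice "Ms i" using summand_bilattice[OF i] .
  interpret J: bilattice "Ms j" using summand_bilattice[OF j] .
  show ?thesis
    using summand_bot_ne_top[OF i] summand_bot_ne_top[OF j] I.bot_le[OF x] I.le_top[OF x]
      J.bot_le[OF y] J.le_top[OF y] I.le_bot_iff[OF x] I.top_le_iff[OF x]
      J.le_bot_iff[OF y] J.top_le_iff[OF y]
    by (auto simp: hsum_emb_def le_hsum)
qed

lemma hsum_le_antisym:
  assumes "u \<in> car K" "v \<in> car K" "le K u v" "le K v u"
  shows "u = v"
proof -
  obtain i x where i: "i \<in> {1..t}" "x \<in> car (Ms i)" "u = hsum_emb Ms i x"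
    using assms(1) by (rule hsum_elem_cases)
  obtain j y where j: "j \<in> {1..t}" "y \<in> car (Ms j)" "v = hsum_emb Ms j y"
    using assms(2) by (rule hsum_elem_cases)
  interpret I: bilattice "Ms i" using summand_bilattice[OF i(1)] .
  show ?thesis
    using assms(3,4) i j le_emb_iff[OF i(1) j(1) i(2) j(2)] le_emb_iff[OF j(1) i(1) j(2) i(2)]
      emb_eq_emb_iff[OF i(1) j(1)] I.le_antisym summand_bot_ne_top[OF i(1)] summand_bot_ne_top[OF j(1)]
    by (auto split: if_splits)
qed

lemma inv_emb:
  assumes i: "i \<in> {1..t}" and x: "x \<in> car (Ms i)"
  shows "inv K (hsum_emb Ms i x) = hsum_emb Ms i (inv (Ms i) x)"
proof -
  interpret I: bilattice "Ms i" using summand_bilattice[OF i] .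
  show ?thesis
    using I.inv_bot I.inv_top I.inv_eq_bot_iff[OF x] I.inv_eq_top_iff[OF x] summand_bot_ne_top[OF i]
    by (auto simp: hsum_emb_def inv_hsum)
qed

lemma join_emb_same:
  assumes i: "i \<in> {1..t}" and x: "x \<in> car (Ms i)" and y: "y \<in> car (Ms i)"
  shows "join K (hsum_emb Ms i x) (hsum_emb Ms i y) = hsum_emb Ms i (join (Ms i) x y)"
proof -
  interpret M: bilattice "Ms i" using summand_bilattice[OF i] .
  let ?z = "join (Ms i) x y"
  have z: "?z \<in> car (Ms i)" and lub: "is_lub (Ms i) x y ?z"
    using M.join_closed M.join_is_lub x y by auto
  have "le K (hsum_emb Ms i ?z) w"
    if w: "w \<in> car K" and ub: "le K (hsum_emb Ms i x) w" "le K (hsum_emb Ms i y) w" for w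
  proof -
    obtain k v where k: "k \<in> {1..t}" "v \<in> car (Ms k)" "w = hsum_emb Ms k v"
      using w by (rule hsum_elem_cases)
    show ?thesis
    proof (cases "k = i")
      case True
      then show ?thesis
        using ub k lub le_emb_iff[OF i k(1)] x y z by (simp add: is_lub_def)
    next
      case False
      then have "?z = bot (Ms i) \<or> v = top (Ms k)"
        using ub k le_emb_iff[OF i k(1)] x y M.join_eq_bot_iff[OF x y] by auto
      then show ?thesis using le_emb_iff[OF i k(1) z k(2)] False k by simp
    qed
  qed
  then have "is_lub K (hsum_emb Ms i x) (hsum_emb Ms i y) (hsum_emb Ms i ?z)"
    using emb_closed[OF i z] le_emb_iff[OF i i] x y z lub by (simp add: is_lub_def)
  then show ?thesis by (rule join_eqI[OF _ hsum_le_antisym])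
qed

lemma meet_emb_same:
  assumes i: "i \<in> {1..t}" and x: "x \<in> car (Ms i)" and y: "y \<in> car (Ms i)"
  shows "meet K (hsum_emb Ms i x) (hsum_emb Ms i y) = hsum_emb Ms i (meet (Ms i) x y)"
proof -
  interpret M: bilattice "Ms i" using summand_bilattice[OF i] .
  let ?z = "meet (Ms i) x y"
  have z: "?z \<in> car (Ms i)" and glb: "is_glb (Ms i) x y ?z"
    using M.meet_closed M.meet_is_glb x y by auto
  have "le K w (hsum_emb Ms i ?z)"
    if w: "w \<in> car K" and lb: "le K w (hsum_emb Ms i x)" "le K w (hsum_emb Ms i y)" for w
  proof -
    obtain k v where k: "k \<in> {1..t}" "v \<in> car (Ms k)" "w = hsum_emb Ms k v"
      using w by (rule hsum_elem_cases)
    show ?thesis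
    proof (cases "k = i")
      case True
      then show ?thesis
        using lb k glb le_emb_iff[OF k(1) i] x y z by (simp add: is_glb_def)
    next
      case False
      then have "v = bot (Ms k) \<or> ?z = top (Ms i)"
        using lb k le_emb_iff[OF k(1) i] x y M.meet_eq_top_iff[OF x y] by auto
      then show ?thesis using le_emb_iff[OF k(1) i k(2) z] False k by auto
    qed
  qed
  then have "is_glb K (hsum_emb Ms i x) (hsum_emb Ms i y) (hsum_emb Ms i ?z)"
    using emb_closed[OF i z] le_emb_iff[OF i i] x y z glb by (simp add: is_glb_def)
  then show ?thesis by (rule meet_eqI[OF _ hsum_le_antisym])
qed

lemma join_emb_diff:
  assumes i: "i \<in> {1..t}" and j: "j \<in> {1..t}" and x: "x \<in> car (Ms i)" and y: "y \<in> car (Ms j)"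
    and "i \<noteq> j"
  shows "join K (hsum_emb Ms i x) (hsum_emb Ms j y) =
     (if x = bot (Ms i) then hsum_emb Ms j y else if y = bot (Ms j) then hsum_emb Ms i x else HTop)"
proof -
  interpret I: bilattice "Ms i" using summand_bilattice[OF i] .
  interpret J: bilattice "Ms j" using summand_bilattice[OF j] .
  consider "x = bot (Ms i)" | "x \<noteq> bot (Ms i)" "y = bot (Ms j)" | "x \<noteq> bot (Ms i)" "y \<noteq> bot (Ms j)"
    by blast
  then show ?thesis
  proof cases
    case 1
    then show ?thesis
      using join_emb_same[OF j J.bot_closed y] J.join_bot_left[OF y] emb_bot[of i] emb_bot[of j] by simp
  next
    case 2
    then show ?thesis
      using join_emb_same[OF i x I.bot_closed] I.join_bot_right[OF x] emb_bot[of i] emb_bot[of j] by simp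
  next
    case 3
    have "le K HTop w" if w: "w \<in> car K"
      and ub: "le K (hsum_emb Ms i x) w" "le K (hsum_emb Ms j y) w" for w
    proof -
      obtain k v where k: "k \<in> {1..t}" "v \<in> car (Ms k)" "w = hsum_emb Ms k v"
        using w by (rule hsum_elem_cases)
      have "v = top (Ms k)"
      proof (cases "k = i")
        case True
        then show ?thesis using ub(2) k le_emb_iff[OF j k(1) y k(2)] 3 \<open>i \<noteq> j\<close> by simp
      next
        case False
        then show ?thesis using ub(1) k le_emb_iff[OF i k(1) x k(2)] 3 by simp
      qed
      then show ?thesis using k emb_top by (simp add: le_hsum)
    qed
    then have "is_lub K (hsum_emb Ms i x) (hsum_emb Ms j y) HTop"
      unfolding is_lub_def by (simp add: HTop_closed le_HTop)
    then show ?thesis using 3 join_eqI[OF _ hsum_le_antisym] by simp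
  qed
qed

lemma meet_emb_diff:
  assumes i: "i \<in> {1..t}" and j: "j \<in> {1..t}" and x: "x \<in> car (Ms i)" and y: "y \<in> car (Ms j)"
    and "i \<noteq> j"
  shows "meet K (hsum_emb Ms i x) (hsum_emb Ms j y) =
     (if x = top (Ms i) then hsum_emb Ms j y else if y = top (Ms j) then hsum_emb Ms i x else HBot)"
proof -
  interpret I: bilattice "Ms i" using summand_bilattice[OF i] .
  interpret J: bilattice "Ms j" using summand_bilattice[OF j] .
  consider "x = top (Ms i)" | "x \<noteq> top (Ms i)" "y = top (Ms j)" | "x \<noteq> top (Ms i)" "y \<noteq> top (Ms j)"
    by blast
  then show ?thesis
  proof cases
    case 1
    then show ?thesis
      using meet_emb_same[OF j J.top_closed y] J.meet_top_left[OF y] emb_top[OF i] emb_top[OF j] by simp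
  next
    case 2
    then show ?thesis
      using meet_emb_same[OF i x I.top_closed] I.meet_top_right[OF x] emb_top[OF i] emb_top[OF j] by simp
  next
    case 3
    have "le K w HBot" if w: "w \<in> car K"
      and lb: "le K w (hsum_emb Ms i x)" "le K w (hsum_emb Ms j y)" for w
    proof -
      obtain k v where k: "k \<in> {1..t}" "v \<in> car (Ms k)" "w = hsum_emb Ms k v"
        using w by (rule hsum_elem_cases)
      have "v = bot (Ms k)"
      proof (cases "k = i")
        case True
        then show ?thesis using lb(2) k le_emb_iff[OF k(1) j k(2) y] 3 \<open>i \<noteq> j\<close> by simp
      next
        case False
        then show ?thesis using lb(1) k le_emb_iff[OF k(1) i k(2) x] 3 by simp
      qed
      then show ?thesis using k emb_bot by (simp add: le_hsum)
    qed
    then have "is_glb K (hsum_emb Ms i x) (hsum_emb Ms j y) HBot"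
      unfolding is_glb_def by (simp add: HBot_closed HBot_le)
    then show ?thesis using 3 meet_eqI[OF _ hsum_le_antisym] by simp
  qed
qed

lemma hsum_inv_closed: "u \<in> car K \<Longrightarrow> inv K u \<in> car K"
  by (erule hsum_elem_cases)
    (simp add: inv_emb emb_closed bilattice.inv_closed[OF summand_bilattice])

lemma hsum_join_meet_closed:
  assumes u: "u \<in> car K" and v: "v \<in> car K"
  shows "join K u v \<in> car K" and "meet K u v \<in> car K"
proof -
  obtain i x where i: "i \<in> {1..t}" "x \<in> car (Ms i)" "u = hsum_emb Ms i x"
    using u by (rule hsum_elem_cases)
  obtain j y where j: "j \<in> {1..t}" "y \<in> car (Ms j)" "v = hsum_emb Ms j y"
    using v by (rule hsum_elem_cases)
  interpret I: bilattice "Ms i" using summand_bilattice[OF i(1)] .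
  show "join K u v \<in> car K"
    using join_emb_same[OF i(1,2)] I.join_closed[OF i(2)] join_emb_diff[OF i(1) j(1) i(2) j(2)]
      emb_closed[OF i(1)] HBot_closed HTop_closed i(3) j(2,3) u v by (cases "i = j") simp_all
  show "meet K u v \<in> car K"
    using meet_emb_same[OF i(1,2)] I.meet_closed[OF i(2)] meet_emb_diff[OF i(1) j(1) i(2) j(2)]
      emb_closed[OF i(1)] HBot_closed HTop_closed i(3) j(2,3) u v by (cases "i = j") simp_all
qed

lemma meet_HTop: "u \<in> car K \<Longrightarrow> meet K u HTop = u"
  and meet_HBot: "u \<in> car K \<Longrightarrow> meet K u HBot = HBot"
proof -
  assume "u \<in> car K"
  then obtain i x where i: "i \<in> {1..t}" "x \<in> car (Ms i)" "u = hsum_emb Ms i x"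
    by (rule hsum_elem_cases)
  interpret I: bilattice "Ms i" using summand_bilattice[OF i(1)] .
  show "meet K u HTop = u"
    using meet_emb_same[OF i(1,2) I.top_closed] emb_top[OF i(1)] I.meet_top_right[OF i(2)] i by simp
  show "meet K u HBot = HBot"
    using meet_emb_same[OF i(1,2) I.bot_closed] emb_bot[of i] I.meet_bot_right[OF i(2)] i by simp
qed

lemma nabla_hsum_Con_BI: "nabla K \<in> Con_BI K"
  using hsum_join_meet_closed hsum_inv_closed by (rule nabla_Con_BI)

subsection \<open>Congruences of a horizontal sum\<close>

lemma exists_other_index: "i \<in> {1..t} \<Longrightarrow> \<exists>j\<in>{1..t}. j \<noteq> i"
  using two_le_t by (cases "i = 1") (auto intro: bexI[of _ 1] bexI[of _ 2])

lemma cong_HBot_HTop_eq_nabla: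
  assumes \<theta>: "\<theta> \<in> Con_BI K" and "(HBot, HTop) \<in> \<theta>"
  shows "\<theta> = nabla K"
proof
  show "\<theta> \<subseteq> nabla K" using Con_BI_subset[OF \<theta>] by (simp add: nabla_def)
  have to_HBot: "(u, HBot) \<in> \<theta>" if "u \<in> car K" for u
    using Con_BI_meet[OF \<theta> Con_BI_refl[OF \<theta> that] Con_BI_sym[OF \<theta> assms(2)]]
      meet_HTop[OF that] meet_HBot[OF that] by simp
  show "nabla K \<subseteq> \<theta>"
  proof
    fix p assume "p \<in> nabla K"
    then obtain u v where "p = (u, v)" "u \<in> car K" "v \<in> car K" by (auto simp: nabla_def)
    then show "p \<in> \<theta>"
      using Con_BI_trans[OF \<theta> to_HBot Con_BI_sym[OF \<theta> to_HBot]] by simp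
  qed
qed

lemma cong_HBot_interior_imp_HBot_HTop:
  assumes \<theta>: "\<theta> \<in> Con_BI K" and i: "i \<in> {1..t}" and x: "x \<in> car (Ms i)"
    and x_ne_bot: "x \<noteq> bot (Ms i)" and x_ne_top: "x \<noteq> top (Ms i)"
    and u: "(HBot, hsum_emb Ms i x) \<in> \<theta>"
  shows "(HBot, HTop) \<in> \<theta>"
proof -
  interpret I: bilattice "Ms i" using summand_bilattice[OF i] .
  obtain j where j: "j \<in> {1..t}" "j \<noteq> i" using exists_other_index[OF i] by blast
  interpret J: bilattice "Ms j" using summand_bilattice[OF j(1)] .
  obtain y where y: "y \<in> car (Ms j)" "y \<noteq> bot (Ms j)" "y \<noteq> top (Ms j)"
    using summand_nontrivial[OF j(1)] by blast
  let ?x' = "inv (Ms i) x"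
  have x': "?x' \<in> car (Ms i)" "?x' \<noteq> top (Ms i)"
    using I.inv_closed[OF x] I.inv_eq_top_iff[OF x] x_ne_bot by auto
  have "(join K HBot (hsum_emb Ms j y), join K (hsum_emb Ms i x) (hsum_emb Ms j y)) \<in> \<theta>"
    using Con_BI_join[OF \<theta> u Con_BI_refl[OF \<theta> emb_closed[OF j(1) y(1)]]] .
  then have y_HTop: "(hsum_emb Ms j y, HTop) \<in> \<theta>"
    using join_emb_same[OF j(1) J.bot_closed y(1)] J.join_bot_left[OF y(1)]
      join_emb_diff[OF i j(1) x y(1)] j(2) x_ne_bot y(2) emb_bot[of j] by simp
  have HTop_x': "(HTop, hsum_emb Ms i ?x') \<in> \<theta>"
    using Con_BI_inv[OF \<theta> u] inv_emb[OF i x] by (simp add: inv_hsum)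
  have "(meet K (hsum_emb Ms j y) (hsum_emb Ms i ?x'), meet K HTop (hsum_emb Ms i ?x')) \<in> \<theta>"
    using Con_BI_meet[OF \<theta> y_HTop Con_BI_refl[OF \<theta> emb_closed[OF i x'(1)]]] .
  then have "(HBot, hsum_emb Ms i ?x') \<in> \<theta>"
    using meet_emb_diff[OF j(1) i y(1) x'(1)] j(2) y(3) x'(2)
      meet_emb_same[OF i I.top_closed x'(1)] emb_top[OF i] I.meet_top_left[OF x'(1)] by simp
  then show ?thesis using HTop_x' Con_BI_sym[OF \<theta>] Con_BI_trans[OF \<theta>] by blast
qed

lemma proper_cong_HBot_class:
  assumes \<theta>: "\<theta> \<in> Con_BI K" and proper: "\<theta> \<noteq> nabla K" and u: "(HBot, u) \<in> \<theta>"
  shows "u = HBot"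
proof (rule ccontr)
  assume "u \<noteq> HBot"
  have "u \<in> car K" using u Con_BI_subset[OF \<theta>] by blast
  then obtain i x where i: "i \<in> {1..t}" "x \<in> car (Ms i)" "u = hsum_emb Ms i x"
    by (rule hsum_elem_cases)
  have "x \<noteq> bot (Ms i)" using \<open>u \<noteq> HBot\<close> i emb_bot by auto
  then have "(HBot, HTop) \<in> \<theta>"
    using cong_HBot_interior_imp_HBot_HTop[OF \<theta> i(1,2)] u i(3) emb_top[OF i(1)]
    by (cases "x = top (Ms i)") simp_all
  then show False using cong_HBot_HTop_eq_nabla[OF \<theta>] proper by blast
qed

lemma proper_cong_HTop_class:
  assumes \<theta>: "\<theta> \<in> Con_BI K" and proper: "\<theta> \<noteq> nabla K" and u: "(HTop, u) \<in> \<theta>"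
  shows "u = HTop"
proof -
  have "u \<in> car K" using u Con_BI_subset[OF \<theta>] by blast
  then obtain i x where i: "i \<in> {1..t}" "x \<in> car (Ms i)" "u = hsum_emb Ms i x"
    by (rule hsum_elem_cases)
  interpret I: bilattice "Ms i" using summand_bilattice[OF i(1)] .
  have "(HBot, hsum_emb Ms i (inv (Ms i) x)) \<in> \<theta>"
    using Con_BI_inv[OF \<theta> u] inv_emb[OF i(1,2)] i(3) by (simp add: inv_hsum)
  then have "inv (Ms i) x = bot (Ms i)"
    using proper_cong_HBot_class[OF \<theta> proper] emb_eq_HBot_iff[OF i(1)] by blast
  then show ?thesis using I.inv_eq_bot_iff[OF i(2)] i(3) emb_top[OF i(1)] by simp
qed

lemma proper_cong_same_summand:
  assumes \<theta>: "\<theta> \<in> Con_BI K" and proper: "\<theta> \<noteq> nabla K"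
    and i: "i \<in> {1..t}" and j: "j \<in> {1..t}" and x: "x \<in> car (Ms i)" and y: "y \<in> car (Ms j)"
    and xy: "(hsum_emb Ms i x, hsum_emb Ms j y) \<in> \<theta>"
    and x_ne_bot: "x \<noteq> bot (Ms i)" and x_ne_top: "x \<noteq> top (Ms i)"
  shows "i = j"
proof (rule ccontr)
  assume "i \<noteq> j"
  interpret I: bilattice "Ms i" using summand_bilattice[OF i] .
  have "y \<noteq> top (Ms j)"
    using xy emb_top[OF j] proper_cong_HTop_class[OF \<theta> proper] Con_BI_sym[OF \<theta>]
      emb_eq_HTop_iff[OF i] x_ne_top by metis
  then have "(meet K (hsum_emb Ms i x) (hsum_emb Ms i x), HBot) \<in> \<theta>"
    using Con_BI_meet[OF \<theta> Con_BI_refl[OF \<theta> emb_closed[OF i x]] xy]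
      meet_emb_diff[OF i j x y \<open>i \<noteq> j\<close>] x_ne_top by simp
  then have "hsum_emb Ms i x = HBot"
    using meet_emb_same[OF i x x] I.meet_idem[OF x] proper_cong_HBot_class[OF \<theta> proper]
      Con_BI_sym[OF \<theta>] by simp
  then show False using emb_eq_HBot_iff[OF i] x_ne_bot by simp
qed

lemma restrict_cong_Con_BI:
  assumes \<theta>: "\<theta> \<in> Con_BI K" and i: "i \<in> {1..t}"
  shows "restrict_cong Ms i \<theta> \<in> Con_BI (Ms i)"
proof (rule Con_BI_I)
  interpret I: bilattice "Ms i" using summand_bilattice[OF i] .
  show "restrict_cong Ms i \<theta> \<subseteq> car (Ms i) \<times> car (Ms i)"
    by (auto simp: restrict_cong_def)
  show "(x, x) \<in> restrict_cong Ms i \<theta>" if "x \<in> car (Ms i)" for x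
    using that Con_BI_refl[OF \<theta> emb_closed[OF i that]] by (simp add: restrict_cong_def)
  show "(y, x) \<in> restrict_cong Ms i \<theta>" if "(x, y) \<in> restrict_cong Ms i \<theta>" for x y
    using that Con_BI_sym[OF \<theta>] by (simp add: restrict_cong_def)
  show "(x, z) \<in> restrict_cong Ms i \<theta>"
    if "(x, y) \<in> restrict_cong Ms i \<theta>" "(y, z) \<in> restrict_cong Ms i \<theta>" for x y z
    using that Con_BI_trans[OF \<theta>] unfolding restrict_cong_def by blast
  fix a b c d
  assume ab: "(a, b) \<in> restrict_cong Ms i \<theta>"
  then have a: "a \<in> car (Ms i)" and b: "b \<in> car (Ms i)"
    and ab\<theta>: "(hsum_emb Ms i a, hsum_emb Ms i b) \<in> \<theta>"
    by (auto simp: restrict_cong_def)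
  show "(inv (Ms i) a, inv (Ms i) b) \<in> restrict_cong Ms i \<theta>"
    using Con_BI_inv[OF \<theta> ab\<theta>] inv_emb[OF i a] inv_emb[OF i b] I.inv_closed a b
    by (simp add: restrict_cong_def)
  assume "(c, d) \<in> restrict_cong Ms i \<theta>"
  then have c: "c \<in> car (Ms i)" and d: "d \<in> car (Ms i)"
    and cd\<theta>: "(hsum_emb Ms i c, hsum_emb Ms i d) \<in> \<theta>"
    by (auto simp: restrict_cong_def)
  show "(join (Ms i) a c, join (Ms i) b d) \<in> restrict_cong Ms i \<theta>"
    using Con_BI_join[OF \<theta> ab\<theta> cd\<theta>] join_emb_same[OF i a c] join_emb_same[OF i b d]
      I.join_closed a b c d by (simp add: restrict_cong_def)
  show "(meet (Ms i) a c, meet (Ms i) b d) \<in> restrict_cong Ms i \<theta>"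
    using Con_BI_meet[OF \<theta> ab\<theta> cd\<theta>] meet_emb_same[OF i a c] meet_emb_same[OF i b d]
      I.meet_closed a b c d by (simp add: restrict_cong_def)
qed

lemma restrict_cong_Con_BI01:
  assumes \<theta>: "\<theta> \<in> Con_BI K" and proper: "\<theta> \<noteq> nabla K" and i: "i \<in> {1..t}"
  shows "restrict_cong Ms i \<theta> \<in> Con_BI01 (Ms i)"
proof -
  interpret I: bilattice "Ms i" using summand_bilattice[OF i] .
  have "restrict_cong Ms i \<theta> `` {bot (Ms i)} = {bot (Ms i)}"
    using proper_cong_HBot_class[OF \<theta> proper] emb_eq_HBot_iff[OF i]
      Con_BI_refl[OF \<theta> HBot_closed] I.bot_closed
    by (auto simp: restrict_cong_def emb_bot)
  moreover have "restrict_cong Ms i \<theta> `` {top (Ms i)} = {top (Ms i)}"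
    using proper_cong_HTop_class[OF \<theta> proper] emb_eq_HTop_iff[OF i]
      Con_BI_refl[OF \<theta> HTop_closed] I.top_closed
    by (auto simp: restrict_cong_def emb_top[OF i])
  ultimately show ?thesis using restrict_cong_Con_BI[OF \<theta> i] by (simp add: Con_BI01_def)
qed

lemma boxplus_restrict_cong:
  assumes \<theta>: "\<theta> \<in> Con_BI K" and proper: "\<theta> \<noteq> nabla K"
  shows "boxplus_cong t Ms (\<lambda>i. restrict_cong Ms i \<theta>) = \<theta>"
proof (intro equalityI subsetI)
  fix p assume "p \<in> boxplus_cong t Ms (\<lambda>i. restrict_cong Ms i \<theta>)"
  then show "p \<in> \<theta>" by (auto simp: boxplus_cong_def restrict_cong_def)
next
  fix p assume p: "p \<in> \<theta>"
  then obtain u v where uv: "p = (u, v)" "u \<in> car K" "v \<in> car K"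
    using Con_BI_subset[OF \<theta>] by blast
  obtain i x where i: "i \<in> {1..t}" "x \<in> car (Ms i)" "u = hsum_emb Ms i x"
    using uv(2) by (rule hsum_elem_cases)
  obtain j y where j: "j \<in> {1..t}" "y \<in> car (Ms j)" "v = hsum_emb Ms j y"
    using uv(3) by (rule hsum_elem_cases)
  show "p \<in> boxplus_cong t Ms (\<lambda>i. restrict_cong Ms i \<theta>)"
  proof (cases "x = bot (Ms i) \<or> x = top (Ms i)")
    case True
    then have "v = u"
      using p uv i proper_cong_HBot_class[OF \<theta> proper] proper_cong_HTop_class[OF \<theta> proper]
        emb_bot emb_top by auto
    moreover have "(x, x) \<in> restrict_cong Ms i \<theta>"
      using i Con_BI_refl[OF \<theta> uv(2)] by (simp add: restrict_cong_def)
    ultimately show ?thesis using uv i unfolding boxplus_cong_iff by blast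
  next
    case False
    then have "i = j"
      using proper_cong_same_summand[OF \<theta> proper i(1) j(1) i(2) j(2)] p uv i j by auto
    then have "(x, y) \<in> restrict_cong Ms i \<theta>" using p uv i j by (simp add: restrict_cong_def)
    then show ?thesis using uv i j \<open>i = j\<close> unfolding boxplus_cong_iff by blast
  qed
qed

context
  fixes \<alpha> :: "nat \<Rightarrow> ('a \<times> 'a) set"
  assumes \<alpha>: "\<And>i. i \<in> {1..t} \<Longrightarrow> \<alpha> i \<in> Con_BI01 (Ms i)"
begin

lemma boxplus_cong_memI:
  "i \<in> {1..t} \<Longrightarrow> (x, y) \<in> \<alpha> i \<Longrightarrow> (hsum_emb Ms i x, hsum_emb Ms i y) \<in> boxplus_cong t Ms \<alpha>"
  unfolding boxplus_cong_def by blast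

lemma boxplus_cong_elim:
  assumes "(u, v) \<in> boxplus_cong t Ms \<alpha>"
  obtains i x y where "i \<in> {1..t}" "(x, y) \<in> \<alpha> i" "x \<in> car (Ms i)" "y \<in> car (Ms i)"
    "u = hsum_emb Ms i x" "v = hsum_emb Ms i y"
  using assms Con_BI_subset[OF Con_BI01_Con_BI[OF \<alpha>]] unfolding boxplus_cong_iff by blast

lemma boxplus_cong_HBot_HTop:
  "(HBot, HBot) \<in> boxplus_cong t Ms \<alpha>" "(HTop, HTop) \<in> boxplus_cong t Ms \<alpha>"
proof -
  have one: "1 \<in> {1..t}" using two_le_t by simp
  interpret M: bilattice "Ms 1" using summand_bilattice[OF one] .
  have "(bot (Ms 1), bot (Ms 1)) \<in> \<alpha> 1" "(top (Ms 1), top (Ms 1)) \<in> \<alpha> 1"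
    using Con_BI_refl[OF Con_BI01_Con_BI[OF \<alpha>[OF one]]] M.bot_closed M.top_closed by auto
  from this[THEN boxplus_cong_memI[OF one]]
  show "(HBot, HBot) \<in> boxplus_cong t Ms \<alpha>" "(HTop, HTop) \<in> boxplus_cong t Ms \<alpha>"
    by (simp_all only: emb_bot emb_top[OF one])
qed

lemma boxplus_cong_trans:
  assumes "(u, v) \<in> boxplus_cong t Ms \<alpha>" and "(v, w) \<in> boxplus_cong t Ms \<alpha>"
  shows "(u, w) \<in> boxplus_cong t Ms \<alpha>"
proof -
  obtain i x y where i: "i \<in> {1..t}" "(x, y) \<in> \<alpha> i" "x \<in> car (Ms i)" "y \<in> car (Ms i)"
    "u = hsum_emb Ms i x" "v = hsum_emb Ms i y"
    using assms(1) by (rule boxplus_cong_elim)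
  obtain j y' z where j: "j \<in> {1..t}" "(y', z) \<in> \<alpha> j" "y' \<in> car (Ms j)" "z \<in> car (Ms j)"
    "v = hsum_emb Ms j y'" "w = hsum_emb Ms j z"
    using assms(2) by (rule boxplus_cong_elim)
  note bt_i = Con_BI01_bot_top[OF \<alpha>[OF i(1)] i(2)]
  note bt_j = Con_BI01_bot_top[OF \<alpha>[OF j(1)] j(2)]
  have "hsum_emb Ms i y = hsum_emb Ms j y'" using i(6) j(5) by simp
  then have "(y = bot (Ms i) \<and> y' = bot (Ms j)) \<or> (y = top (Ms i) \<and> y' = top (Ms j)) \<or> (i = j \<and> y = y')"
    using emb_eq_emb_iff[OF i(1) j(1)] by simp
  then show ?thesis
  proof (elim disjE conjE)
    assume "y = bot (Ms i)" "y' = bot (Ms j)"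
    then have "u = HBot" "w = HBot" using bt_i bt_j i(5) j(6) emb_bot by simp_all
    then show ?thesis using boxplus_cong_HBot_HTop(1) by simp
  next
    assume "y = top (Ms i)" "y' = top (Ms j)"
    then have "u = HTop" "w = HTop" using bt_i bt_j i(5) j(6) emb_top[OF i(1)] emb_top[OF j(1)]
      by simp_all
    then show ?thesis using boxplus_cong_HBot_HTop(2) by simp
  next
    assume "i = j" "y = y'"
    then have "(x, z) \<in> \<alpha> i"
      using Con_BI_trans[OF Con_BI01_Con_BI[OF \<alpha>[OF i(1)]] i(2)] j(2) by simp
    then show ?thesis using boxplus_cong_memI[OF i(1)] i(5) j(6) \<open>i = j\<close> by simp
  qed
qed

lemma boxplus_cong_join:
  assumes "(u, v) \<in> boxplus_cong t Ms \<alpha>" and "(u', v') \<in> boxplus_cong t Ms \<alpha>"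
  shows "(join K u u', join K v v') \<in> boxplus_cong t Ms \<alpha>"
proof -
  obtain i a b where i: "i \<in> {1..t}" "(a, b) \<in> \<alpha> i" "a \<in> car (Ms i)" "b \<in> car (Ms i)"
    "u = hsum_emb Ms i a" "v = hsum_emb Ms i b"
    using assms(1) by (rule boxplus_cong_elim)
  obtain j c d where j: "j \<in> {1..t}" "(c, d) \<in> \<alpha> j" "c \<in> car (Ms j)" "d \<in> car (Ms j)"
    "u' = hsum_emb Ms j c" "v' = hsum_emb Ms j d"
    using assms(2) by (rule boxplus_cong_elim)
  show ?thesis
  proof (cases "i = j")
    case True
    then have "(join (Ms i) a c, join (Ms i) b d) \<in> \<alpha> i"
      using Con_BI_join[OF Con_BI01_Con_BI[OF \<alpha>[OF i(1)]] i(2)] j(2) by simp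
    then show ?thesis
      using boxplus_cong_memI[OF i(1)] join_emb_same[OF i(1) i(3)] join_emb_same[OF i(1) i(4)]
        i(5,6) j(3-6) True by simp
  next
    case False
    then show ?thesis
      using join_emb_diff[OF i(1) j(1) i(3) j(3)] join_emb_diff[OF i(1) j(1) i(4) j(4)]
        Con_BI01_bot_top[OF \<alpha>[OF i(1)] i(2)] Con_BI01_bot_top[OF \<alpha>[OF j(1)] j(2)]
        boxplus_cong_HBot_HTop assms i(5,6) j(5,6) by auto
  qed
qed

lemma boxplus_cong_meet:
  assumes "(u, v) \<in> boxplus_cong t Ms \<alpha>" and "(u', v') \<in> boxplus_cong t Ms \<alpha>"
  shows "(meet K u u', meet K v v') \<in> boxplus_cong t Ms \<alpha>"
proof -
  obtain i a b where i: "i \<in> {1..t}" "(a, b) \<in> \<alpha> i" "a \<in> car (Ms i)" "b \<in> car (Ms i)"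
    "u = hsum_emb Ms i a" "v = hsum_emb Ms i b"
    using assms(1) by (rule boxplus_cong_elim)
  obtain j c d where j: "j \<in> {1..t}" "(c, d) \<in> \<alpha> j" "c \<in> car (Ms j)" "d \<in> car (Ms j)"
    "u' = hsum_emb Ms j c" "v' = hsum_emb Ms j d"
    using assms(2) by (rule boxplus_cong_elim)
  show ?thesis
  proof (cases "i = j")
    case True
    then have "(meet (Ms i) a c, meet (Ms i) b d) \<in> \<alpha> i"
      using Con_BI_meet[OF Con_BI01_Con_BI[OF \<alpha>[OF i(1)]] i(2)] j(2) by simp
    then show ?thesis
      using boxplus_cong_memI[OF i(1)] meet_emb_same[OF i(1) i(3)] meet_emb_same[OF i(1) i(4)]
        i(5,6) j(3-6) True by simp
  next
    case False
    then show ?thesis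
      using meet_emb_diff[OF i(1) j(1) i(3) j(3)] meet_emb_diff[OF i(1) j(1) i(4) j(4)]
        Con_BI01_bot_top[OF \<alpha>[OF i(1)] i(2)] Con_BI01_bot_top[OF \<alpha>[OF j(1)] j(2)]
        boxplus_cong_HBot_HTop assms i(5,6) j(5,6) by auto
  qed
qed

lemma boxplus_cong_Con_BI: "boxplus_cong t Ms \<alpha> \<in> Con_BI K"
proof (rule Con_BI_I)
  show "boxplus_cong t Ms \<alpha> \<subseteq> car K \<times> car K"
  proof clarify
    fix u v assume "(u, v) \<in> boxplus_cong t Ms \<alpha>"
    then show "u \<in> car K \<and> v \<in> car K"
      by (rule boxplus_cong_elim) (simp add: emb_closed)
  qed
  show "(u, u) \<in> boxplus_cong t Ms \<alpha>" if u: "u \<in> car K" for u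
  proof -
    obtain i x where "i \<in> {1..t}" "x \<in> car (Ms i)" "u = hsum_emb Ms i x"
      using u by (rule hsum_elem_cases)
    then show ?thesis
      using boxplus_cong_memI Con_BI_refl[OF Con_BI01_Con_BI[OF \<alpha>]] by simp
  qed
  show "(v, u) \<in> boxplus_cong t Ms \<alpha>" if uv: "(u, v) \<in> boxplus_cong t Ms \<alpha>" for u v
  proof -
    obtain i x y where "i \<in> {1..t}" "(x, y) \<in> \<alpha> i" "u = hsum_emb Ms i x" "v = hsum_emb Ms i y"
      using uv by (rule boxplus_cong_elim)
    then show ?thesis
      using boxplus_cong_memI Con_BI_sym[OF Con_BI01_Con_BI[OF \<alpha>]] by simp
  qed
  show "(inv K u, inv K v) \<in> boxplus_cong t Ms \<alpha>" if uv: "(u, v) \<in> boxplus_cong t Ms \<alpha>" for u v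
  proof -
    obtain i x y where "i \<in> {1..t}" "(x, y) \<in> \<alpha> i" "x \<in> car (Ms i)" "y \<in> car (Ms i)"
      "u = hsum_emb Ms i x" "v = hsum_emb Ms i y"
      using uv by (rule boxplus_cong_elim)
    then show ?thesis
      using boxplus_cong_memI Con_BI_inv[OF Con_BI01_Con_BI[OF \<alpha>]] inv_emb by simp
  qed
qed (fact boxplus_cong_trans boxplus_cong_join boxplus_cong_meet)+

lemma restrict_boxplus_cong:
  assumes i: "i \<in> {1..t}"
  shows "restrict_cong Ms i (boxplus_cong t Ms \<alpha>) = \<alpha> i"
proof (intro equalityI subsetI)
  fix p assume p: "p \<in> \<alpha> i"
  obtain x y where xy: "p = (x, y)" by (cases p)
  have "x \<in> car (Ms i)" "y \<in> car (Ms i)"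
    using p xy Con_BI_subset[OF Con_BI01_Con_BI[OF \<alpha>[OF i]]] by auto
  then show "p \<in> restrict_cong Ms i (boxplus_cong t Ms \<alpha>)"
    using boxplus_cong_memI[OF i] p xy by (simp add: restrict_cong_def)
next
  fix p assume "p \<in> restrict_cong Ms i (boxplus_cong t Ms \<alpha>)"
  then obtain x y where p: "p = (x, y)" "x \<in> car (Ms i)" "y \<in> car (Ms i)"
    "(hsum_emb Ms i x, hsum_emb Ms i y) \<in> boxplus_cong t Ms \<alpha>"
    by (auto simp: restrict_cong_def)
  obtain j x' y' where j: "j \<in> {1..t}" "(x', y') \<in> \<alpha> j" "x' \<in> car (Ms j)" "y' \<in> car (Ms j)"
    "hsum_emb Ms i x = hsum_emb Ms j x'" "hsum_emb Ms i y = hsum_emb Ms j y'"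
    using p(4) by (rule boxplus_cong_elim)
  show "p \<in> \<alpha> i"
  proof (cases "i = j")
    case True
    then have "x = x'" "y = y'" using emb_eq_emb_iff[OF i i] j(5,6) by auto
    then show ?thesis using True j(2) p(1) by simp
  next
    case False
    then have "(x = bot (Ms i) \<and> x' = bot (Ms j)) \<or> (x = top (Ms i) \<and> x' = top (Ms j))"
      and "(y = bot (Ms i) \<and> y' = bot (Ms j)) \<or> (y = top (Ms i) \<and> y' = top (Ms j))"
      using emb_eq_emb_iff[OF i j(1)] j(5,6) by simp_all
    then have "x = y"
      using Con_BI01_bot_top[OF \<alpha>[OF j(1)] j(2)] summand_bot_ne_top[OF j(1)] by auto
    then show ?thesis using p(1,2) Con_BI_refl[OF Con_BI01_Con_BI[OF \<alpha>[OF i]]] by simp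
  qed
qed

lemma boxplus_cong_proper: "boxplus_cong t Ms \<alpha> \<subset> nabla K"
proof -
  have "(HBot, HTop) \<notin> boxplus_cong t Ms \<alpha>"
  proof
    assume "(HBot, HTop) \<in> boxplus_cong t Ms \<alpha>"
    then obtain i x y where i: "i \<in> {1..t}" "(x, y) \<in> \<alpha> i" "HBot = hsum_emb Ms i x" "HTop = hsum_emb Ms i y"
      by (rule boxplus_cong_elim)
    then have "x = bot (Ms i)" "y = top (Ms i)"
      using emb_eq_HBot_iff[OF i(1)] emb_eq_HTop_iff[OF i(1)] by metis+
    then show False
      using Con_BI01_bot_top[OF \<alpha>[OF i(1)] i(2)] summand_bot_ne_top[OF i(1)] by simp
  qed
  moreover have "boxplus_cong t Ms \<alpha> \<subseteq> nabla K"
    using Con_BI_subset[OF boxplus_cong_Con_BI] by (simp add: nabla_def)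
  moreover have "(HBot, HTop) \<in> nabla K" using HBot_closed HTop_closed by (simp add: nabla_def)
  ultimately show ?thesis by blast
qed

end

lemma boxplus_cong_subset_iff:
  assumes "\<And>i. i \<in> {1..t} \<Longrightarrow> \<alpha> i \<in> Con_BI01 (Ms i)"
    and "\<And>i. i \<in> {1..t} \<Longrightarrow> \<beta> i \<in> Con_BI01 (Ms i)"
  shows "boxplus_cong t Ms \<alpha> \<subseteq> boxplus_cong t Ms \<beta> \<longleftrightarrow> (\<forall>i\<in>{1..t}. \<alpha> i \<subseteq> \<beta> i)"
proof
  assume sub: "boxplus_cong t Ms \<alpha> \<subseteq> boxplus_cong t Ms \<beta>"
  show "\<forall>i\<in>{1..t}. \<alpha> i \<subseteq> \<beta> i"
  proof
    fix i assume i: "i \<in> {1..t}"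
    have "restrict_cong Ms i (boxplus_cong t Ms \<alpha>) \<subseteq> restrict_cong Ms i (boxplus_cong t Ms \<beta>)"
      using sub by (auto simp: restrict_cong_def)
    then show "\<alpha> i \<subseteq> \<beta> i"
      using restrict_boxplus_cong[OF assms(1) i] restrict_boxplus_cong[OF assms(2) i] by simp
  qed
next
  assume "\<forall>i\<in>{1..t}. \<alpha> i \<subseteq> \<beta> i"
  then show "boxplus_cong t Ms \<alpha> \<subseteq> boxplus_cong t Ms \<beta>" unfolding boxplus_cong_def by blast
qed

lemma Con_BI_hsum:
  "Con_BI K = {boxplus_cong t Ms \<alpha> | \<alpha>. \<forall>i\<in>{1..t}. \<alpha> i \<in> Con_BI01 (Ms i)} \<union> {nabla K}"
proof (intro equalityI subsetI)
  fix \<theta> assume \<theta>: "\<theta> \<in> Con_BI K"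
  show "\<theta> \<in> {boxplus_cong t Ms \<alpha> | \<alpha>. \<forall>i\<in>{1..t}. \<alpha> i \<in> Con_BI01 (Ms i)} \<union> {nabla K}"
  proof (cases "\<theta> = nabla K")
    case False
    then show ?thesis
      using restrict_cong_Con_BI01[OF \<theta> False] boxplus_restrict_cong[OF \<theta> False] by blast
  qed simp
next
  fix \<theta> assume "\<theta> \<in> {boxplus_cong t Ms \<alpha> | \<alpha>. \<forall>i\<in>{1..t}. \<alpha> i \<in> Con_BI01 (Ms i)} \<union> {nabla K}"
  then show "\<theta> \<in> Con_BI K" using boxplus_cong_Con_BI nabla_hsum_Con_BI by auto
qed

lemma Con_BI_hsum_parametrized:
  assumes G: "\<forall>i\<in>{1..t}. Con_BI01 (Ms i) = G i ` P i"
    and G_mono: "\<And>i a b. i \<in> {1..t} \<Longrightarrow> a \<in> P i \<Longrightarrow> b \<in> P i \<Longrightarrow> G i a \<subseteq> G i b \<longleftrightarrow> a \<subseteq> b"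
  shows "Con_BI K = (\<lambda>\<beta>. boxplus_cong t Ms (\<lambda>i. G i (\<beta> i))) ` PiE {1..t} P \<union> {nabla K}"
    and "order_iso (Con_BI K) (\<subseteq>) (prod_plus_carrier t P) (prod_plus_le t)"
proof -
  let ?F = "\<lambda>\<beta>. boxplus_cong t Ms (\<lambda>i. G i (\<beta> i))"
  have F_Con_BI01: "G i (\<beta> i) \<in> Con_BI01 (Ms i)" if "\<beta> \<in> PiE {1..t} P" "i \<in> {1..t}" for \<beta> i
    using that G by auto
  show classification: "Con_BI K = ?F ` PiE {1..t} P \<union> {nabla K}"
    using Con_BI_hsum boxplus_cong_Setcompr_eq_image[OF G] by simp
  show "order_iso (Con_BI K) (\<subseteq>) (prod_plus_carrier t P) (prod_plus_le t)"
  proof (rule order_iso_prod_plus[OF classification])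
    fix a b assume a: "a \<in> PiE {1..t} P" and b: "b \<in> PiE {1..t} P"
    have "?F a \<subseteq> ?F b \<longleftrightarrow> (\<forall>i\<in>{1..t}. G i (a i) \<subseteq> G i (b i))"
      by (rule boxplus_cong_subset_iff[OF F_Con_BI01[OF a] F_Con_BI01[OF b]])
    also have "\<dots> \<longleftrightarrow> (\<forall>i\<in>{1..t}. a i \<subseteq> b i)"
      using G_mono a b by (simp add: PiE_iff)
    finally show "?F a \<subseteq> ?F b \<longleftrightarrow> (\<forall>i\<in>{1..t}. a i \<subseteq> b i)" .
  next
    fix a assume "a \<in> PiE {1..t} P"
    then show "?F a \<subset> nabla K" by (rule boxplus_cong_proper[OF F_Con_BI01])
  qed
qed

lemma Con_BI_hsum_image:
  shows "Con_BI K = boxplus_cong t Ms ` PiE {1..t} (\<lambda>i. Con_BI01 (Ms i)) \<union> {nabla K}"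
    and "order_iso (Con_BI K) (\<subseteq>) (prod_plus_carrier t (\<lambda>i. Con_BI01 (Ms i))) (prod_plus_le t)"
  using Con_BI_hsum_parametrized[where G = "\<lambda>i \<alpha>. \<alpha>" and P = "\<lambda>i. Con_BI01 (Ms i)"] by simp_all

lemma emb_image_class:
  assumes i: "i \<in> {1..t}" and \<alpha>: "\<alpha> \<in> Con_BI01 (Ms i)" and C: "C \<in> car (Ms i) // \<alpha>"
  shows "hsum_emb Ms i ` C =
    (if C = {bot (Ms i)} then {HBot} else if C = {top (Ms i)} then {HTop} else HEl i ` C)"
proof -
  consider "C = {bot (Ms i)}" | "C = {top (Ms i)}" | "bot (Ms i) \<notin> C" "top (Ms i) \<notin> C"
    using Con_BI01_class_cases[OF \<alpha> C] by blast
  then show ?thesis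
  proof cases
    case 3
    then have "C \<noteq> {bot (Ms i)}" "C \<noteq> {top (Ms i)}" by auto
    moreover have "hsum_emb Ms i ` C = HEl i ` C"
      using 3 by (intro image_cong[OF refl] emb_eq_HEl) auto
    ultimately show ?thesis by simp
  qed (use emb_bot emb_top[OF i] summand_bot_ne_top[OF i] in auto)
qed

lemma interior_classes_eq_emb_classes:
  assumes \<alpha>: "\<And>i. i \<in> {1..t} \<Longrightarrow> \<alpha> i \<in> Con_BI01 (Ms i)"
  shows "{{HBot}, {HTop}} \<union>
      (\<Union>i\<in>{1..t}. (\<lambda>C. HEl i ` C) ` (car (Ms i) // \<alpha> i - {{bot (Ms i)}, {top (Ms i)}})) =
    (\<Union>i\<in>{1..t}. (\<lambda>C. hsum_emb Ms i ` C) ` (car (Ms i) // \<alpha> i))"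
    (is "?L = (\<Union>i\<in>{1..t}. ?R i)")
proof (intro equalityI Un_least UN_least)
  have one: "1 \<in> {1..t}" using two_le_t by simp
  have "\<alpha> 1 `` {bot (Ms 1)} = {bot (Ms 1)}" "\<alpha> 1 `` {top (Ms 1)} = {top (Ms 1)}"
    using \<alpha>[OF one] by (simp_all add: Con_BI01_def)
  then have "{bot (Ms 1)} \<in> car (Ms 1) // \<alpha> 1" "{top (Ms 1)} \<in> car (Ms 1) // \<alpha> 1"
    using quotientI[OF bilattice.bot_closed[OF summand_bilattice[OF one]], of "\<alpha> 1"]
      quotientI[OF bilattice.top_closed[OF summand_bilattice[OF one]], of "\<alpha> 1"] by simp_all
  moreover have "hsum_emb Ms 1 ` {bot (Ms 1)} = {HBot}" "hsum_emb Ms 1 ` {top (Ms 1)} = {HTop}"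
    using emb_top[OF one] by (simp_all add: emb_bot)
  ultimately have "{HBot} \<in> ?R 1" "{HTop} \<in> ?R 1" by (metis image_eqI)+
  then show "{{HBot}, {HTop}} \<subseteq> (\<Union>i\<in>{1..t}. ?R i)" using one by blast
next
  fix i assume i: "i \<in> {1..t}"
  show "(\<lambda>C. HEl i ` C) ` (car (Ms i) // \<alpha> i - {{bot (Ms i)}, {top (Ms i)}}) \<subseteq>
      (\<Union>i\<in>{1..t}. ?R i)"
  proof
    fix D assume "D \<in> (\<lambda>C. HEl i ` C) ` (car (Ms i) // \<alpha> i - {{bot (Ms i)}, {top (Ms i)}})"
    then obtain C where C: "C \<in> car (Ms i) // \<alpha> i" "C \<noteq> {bot (Ms i)}" "C \<noteq> {top (Ms i)}"
      and D: "D = HEl i ` C"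
      by blast
    then have "D = hsum_emb Ms i ` C" using emb_image_class[OF i \<alpha>[OF i] C(1)] by simp
    then show "D \<in> (\<Union>i\<in>{1..t}. ?R i)" using i C(1) by blast
  qed
  show "?R i \<subseteq> ?L"
  proof
    fix D assume "D \<in> ?R i"
    then obtain C where C: "C \<in> car (Ms i) // \<alpha> i" and D: "D = hsum_emb Ms i ` C" by blast
    show "D \<in> ?L"
    proof (cases "C = {bot (Ms i)} \<or> C = {top (Ms i)}")
      case True
      then show ?thesis using emb_image_class[OF i \<alpha>[OF i] C] D by auto
    next
      case False
      then have "D \<in> (\<lambda>C. HEl i ` C) ` (car (Ms i) // \<alpha> i - {{bot (Ms i)}, {top (Ms i)}})"
        using emb_image_class[OF i \<alpha>[OF i] C] C D by auto
      then show ?thesis using i by blast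
    qed
  qed
qed

lemma hsum_cong_eq_boxplus_cong:
  assumes \<alpha>: "\<And>i. i \<in> {1..t} \<Longrightarrow> \<alpha> i \<in> Con_BI01 (Ms i)"
  shows "hsum_cong t Ms \<alpha> = boxplus_cong t Ms \<alpha>"
  using hsum_cong_eq_of_interior_classes[OF \<alpha>] interior_classes_eq_emb_classes[OF \<alpha>]
    boxplus_cong_eq_of[OF Con_BI_equiv[OF Con_BI01_Con_BI[OF \<alpha>]]]
  by simp

lemma hsum_cong_Setcompr_eq_image:
  "{hsum_cong t Ms \<alpha> | \<alpha>. \<alpha> \<in> PiE {1..t} (\<lambda>i. Con_BI01 (Ms i))} =
    boxplus_cong t Ms ` PiE {1..t} (\<lambda>i. Con_BI01 (Ms i))"
  unfolding Setcompr_eq_image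
  by (rule image_cong[OF refl], rule hsum_cong_eq_boxplus_cong) (simp add: PiE_iff)

end

section \<open>Adding a new bottom and top\<close>

lemma car_ext_bl: "car (ext_bl M) = {EBot, ETop} \<union> EIn ` car M"
  and le_ext_bl: "le (ext_bl M) u v \<longleftrightarrow> u = EBot \<or> v = ETop \<or> (\<exists>x y. u = EIn x \<and> v = EIn y \<and> le M x y)"
  and inv_ext_bl: "inv (ext_bl M) u = (case u of EBot \<Rightarrow> ETop | ETop \<Rightarrow> EBot | EIn x \<Rightarrow> EIn (inv M x))"
  by (simp_all add: ext_bl_def)

lemma le_ext_bl_simps [simp]:
  "le (ext_bl M) EBot v"
  "le (ext_bl M) u ETop"
  "le (ext_bl M) u EBot \<longleftrightarrow> u = EBot"
  "le (ext_bl M) ETop v \<longleftrightarrow> v = ETop"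
  "le (ext_bl M) (EIn x) (EIn y) \<longleftrightarrow> le M x y"
  by (auto simp: le_ext_bl)

lemma bot_ext_bl: "bot (ext_bl M) = EBot"
  unfolding bot_def by (rule the_equality) (auto simp: car_ext_bl le_ext_bl)

lemma top_ext_bl: "top (ext_bl M) = ETop"
  unfolding top_def by (rule the_equality) (auto simp: car_ext_bl le_ext_bl)

fun ext_join :: "'a bilat \<Rightarrow> 'a ext \<Rightarrow> 'a ext \<Rightarrow> 'a ext" where
  "ext_join M EBot v = v"
| "ext_join M ETop v = ETop"
| "ext_join M u EBot = u"
| "ext_join M u ETop = ETop"
| "ext_join M (EIn x) (EIn y) = EIn (join M x y)"

fun ext_meet :: "'a bilat \<Rightarrow> 'a ext \<Rightarrow> 'a ext \<Rightarrow> 'a ext" where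
  "ext_meet M ETop v = v"
| "ext_meet M EBot v = EBot"
| "ext_meet M u ETop = u"
| "ext_meet M u EBot = EBot"
| "ext_meet M (EIn x) (EIn y) = EIn (meet M x y)"

definition ext_cong :: "('a \<times> 'a) set \<Rightarrow> ('a ext \<times> 'a ext) set" where
  "ext_cong \<beta> = {(EIn x, EIn y) | x y. (x, y) \<in> \<beta>} \<union> {(EBot, EBot), (ETop, ETop)}"

definition inner_cong :: "('a ext \<times> 'a ext) set \<Rightarrow> ('a \<times> 'a) set" where
  "inner_cong \<alpha> = {(x, y). (EIn x, EIn y) \<in> \<alpha>}"

lemma ext_congE:
  assumes "(u, v) \<in> ext_cong \<beta>"
  obtains "u = EBot" "v = EBot" | "u = ETop" "v = ETop" | x y where "u = EIn x" "v = EIn y" "(x, y) \<in> \<beta>"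
  using assms by (auto simp: ext_cong_def)

lemma ext_cong_subset_iff: "ext_cong \<beta> \<subseteq> ext_cong \<beta>' \<longleftrightarrow> \<beta> \<subseteq> \<beta>'"
  by (auto simp: ext_cong_def)

lemma equiv_ext_cong:
  assumes "equiv (car M) \<beta>"
  shows "equiv (car (ext_bl M)) (ext_cong \<beta>)"
proof -
  obtain sub: "\<beta> \<subseteq> car M \<times> car M" and refl: "refl_on (car M) \<beta>" and "sym \<beta>" "trans \<beta>"
    using assms by (rule equivE)
  show ?thesis
  proof (rule equivI)
    show "ext_cong \<beta> \<subseteq> car (ext_bl M) \<times> car (ext_bl M)"
      using sub by (auto simp: ext_cong_def car_ext_bl)
    show "refl_on (car (ext_bl M)) (ext_cong \<beta>)"
      by (rule refl_onI) (auto simp: ext_cong_def car_ext_bl intro: refl_onD[OF refl])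
    show "sym (ext_cong \<beta>)"
      by (rule symI) (auto simp: ext_cong_def intro: symD[OF \<open>sym \<beta>\<close>])
    show "trans (ext_cong \<beta>)"
      by (rule transI) (auto simp: ext_cong_def intro: transD[OF \<open>trans \<beta>\<close>])
  qed
qed

lemma quotient_ext_cong:
  assumes \<beta>: "equiv (car M) \<beta>"
  shows "car (ext_bl M) // ext_cong \<beta> = {{EBot}, {ETop}} \<union> (\<lambda>C. EIn ` C) ` (car M // \<beta>)"
proof -
  have "ext_cong \<beta> `` {EIn x} = EIn ` (\<beta> `` {x})" for x
    by (auto simp: ext_cong_def)
  moreover have "ext_cong \<beta> `` {EBot} = {EBot}" "ext_cong \<beta> `` {ETop} = {ETop}"
    by (auto simp: ext_cong_def)
  ultimately show ?thesis
    unfolding quotient_def car_ext_bl by (auto simp: image_iff)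
qed

context bilattice begin

abbreviation E :: "'a ext bilat" where "E \<equiv> ext_bl B"

lemma ext_le_refl: "u \<in> car E \<Longrightarrow> le E u u"
  by (cases u) (auto simp: car_ext_bl le_refl)

lemma ext_le_antisym:
  assumes "u \<in> car E" "v \<in> car E" "le E u v" "le E v u"
  shows "u = v"
proof (cases "\<exists>x y. u = EIn x \<and> v = EIn y")
  case True
  then obtain x y where "u = EIn x" "v = EIn y" by blast
  then show ?thesis using assms le_antisym by (auto simp: car_ext_bl)
next
  case False
  then show ?thesis using assms by (cases u; cases v) auto
qed

lemma ext_le_trans:
  assumes "u \<in> car E" "v \<in> car E" "w \<in> car E" "le E u v" "le E v w"
  shows "le E u w"
proof (cases "\<exists>x y z. u = EIn x \<and> v = EIn y \<and> w = EIn z")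
  case True
  then obtain x y z where "u = EIn x" "v = EIn y" "w = EIn z" by blast
  then show ?thesis using assms le_trans[of x y z] by (auto simp: car_ext_bl)
next
  case False
  then show ?thesis using assms by (cases u; cases v; cases w) auto
qed

lemma ext_join_is_lub:
  assumes "u \<in> car E" "v \<in> car E"
  shows "is_lub E u v (ext_join B u v)"
proof (cases "\<exists>x y. u = EIn x \<and> v = EIn y")
  case True
  then obtain x y where "u = EIn x" "v = EIn y" "x \<in> car B" "y \<in> car B"
    using assms by (auto simp: car_ext_bl)
  moreover from this have "is_lub B x y (join B x y)" by (intro join_is_lub)
  ultimately show ?thesis
    unfolding is_lub_def by (auto simp: car_ext_bl le_ext_bl)
next
  case False
  then show ?thesis using assms by (cases u; cases v) (auto simp: is_lub_def car_ext_bl le_refl)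
qed

lemma ext_meet_is_glb:
  assumes "u \<in> car E" "v \<in> car E"
  shows "is_glb E u v (ext_meet B u v)"
proof (cases "\<exists>x y. u = EIn x \<and> v = EIn y")
  case True
  then obtain x y where "u = EIn x" "v = EIn y" "x \<in> car B" "y \<in> car B"
    using assms by (auto simp: car_ext_bl)
  moreover from this have "is_glb B x y (meet B x y)" by (intro meet_is_glb)
  ultimately show ?thesis
    unfolding is_glb_def by (auto simp: car_ext_bl le_ext_bl)
next
  case False
  then show ?thesis using assms by (cases u; cases v) (auto simp: is_glb_def car_ext_bl le_refl)
qed

lemma bi_lattice_ext_bl: "bi_lattice E"
  unfolding bi_lattice_def bounded_lattice_on_def
proof (intro conjI)
  show "\<forall>x\<in>car E. le E x x" using ext_le_refl by blast
  show "\<forall>x\<in>car E. \<forall>y\<in>car E. le E x y \<and> le E y x \<longrightarrow> x = y" using ext_le_antisym by blast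
  show "\<forall>x\<in>car E. \<forall>y\<in>car E. \<forall>z\<in>car E. le E x y \<and> le E y z \<longrightarrow> le E x z"
    using ext_le_trans by blast
  show "\<forall>x\<in>car E. \<forall>y\<in>car E. (\<exists>z. is_lub E x y z) \<and> (\<exists>z. is_glb E x y z)"
    using ext_join_is_lub ext_meet_is_glb by blast
  show "\<exists>z\<in>car E. \<forall>x\<in>car E. le E z x" "\<exists>z\<in>car E. \<forall>x\<in>car E. le E x z"
    by (auto simp: car_ext_bl)
  show "\<forall>a\<in>car E. inv E a \<in> car E" "\<forall>a\<in>car E. inv E (inv E a) = a"
    using inv_closed inv_inv by (auto simp: car_ext_bl inv_ext_bl)
  show "\<forall>a\<in>car E. \<forall>b\<in>car E. le E a b \<longrightarrow> le E (inv E b) (inv E a)"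
  proof (intro ballI impI)
    fix a b assume "a \<in> car E" "b \<in> car E" "le E a b"
    then show "le E (inv E b) (inv E a)"
      using inv_antimono by (cases a; cases b) (auto simp: car_ext_bl inv_ext_bl)
  qed
qed

lemma join_ext_bl: "u \<in> car E \<Longrightarrow> v \<in> car E \<Longrightarrow> join E u v = ext_join B u v"
  by (rule join_eqI[OF ext_join_is_lub ext_le_antisym])

lemma meet_ext_bl: "u \<in> car E \<Longrightarrow> v \<in> car E \<Longrightarrow> meet E u v = ext_meet B u v"
  by (rule meet_eqI[OF ext_meet_is_glb ext_le_antisym])

lemma ext_bl_nontrivial: "\<exists>u\<in>car E. u \<noteq> bot E \<and> u \<noteq> top E"
  using bot_closed by (auto simp: car_ext_bl bot_ext_bl top_ext_bl)

lemma ext_cong_Con_BI01: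
  assumes \<beta>: "\<beta> \<in> Con_BI B"
  shows "ext_cong \<beta> \<in> Con_BI01 E"
proof -
  have equiv: "equiv (car E) (ext_cong \<beta>)" using equiv_ext_cong[OF Con_BI_equiv[OF \<beta>]] .
  have compat: "(join E u u', join E v v') \<in> ext_cong \<beta> \<and> (meet E u u', meet E v v') \<in> ext_cong \<beta>"
    if uv: "(u, v) \<in> ext_cong \<beta>" "(u', v') \<in> ext_cong \<beta>" for u v u' v'
  proof -
    have car: "u \<in> car E" "v \<in> car E" "u' \<in> car E" "v' \<in> car E"
      using uv equiv_type[OF equiv] by blast+
    have "(ext_join B u u', ext_join B v v') \<in> ext_cong \<beta> \<and>
        (ext_meet B u u', ext_meet B v v') \<in> ext_cong \<beta>"
      using uv Con_BI_join[OF \<beta>] Con_BI_meet[OF \<beta>]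
      by (elim ext_congE) (auto simp: ext_cong_def)
    then show ?thesis using car by (simp add: join_ext_bl meet_ext_bl)
  qed
  have "ext_cong \<beta> \<in> Con_BI E"
  proof (rule Con_BI_equivI[OF equiv])
    fix u v assume "(u, v) \<in> ext_cong \<beta>"
    then show "(inv E u, inv E v) \<in> ext_cong \<beta>"
      using Con_BI_inv[OF \<beta>] by (elim ext_congE) (auto simp: ext_cong_def inv_ext_bl)
  qed (use compat in blast)+
  then show ?thesis
    by (auto simp: Con_BI01_def bot_ext_bl top_ext_bl ext_cong_def)
qed

lemma inner_cong_Con_BI:
  assumes "\<alpha> \<in> Con_BI01 E"
  shows "inner_cong \<alpha> \<in> Con_BI B"
proof -
  note \<alpha>_cong = Con_BI01_Con_BI[OF assms]
  show ?thesis
  proof (rule Con_BI_I)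
    fix a b c d assume "(a, b) \<in> inner_cong \<alpha>" and "(c, d) \<in> inner_cong \<alpha>"
    then have ab: "(EIn a, EIn b) \<in> \<alpha>" and cd: "(EIn c, EIn d) \<in> \<alpha>"
      by (simp_all add: inner_cong_def)
    then have "EIn a \<in> car E" "EIn b \<in> car E" "EIn c \<in> car E" "EIn d \<in> car E"
      using Con_BI_subset[OF \<alpha>_cong] by blast+
    then show "(join B a c, join B b d) \<in> inner_cong \<alpha>" "(meet B a c, meet B b d) \<in> inner_cong \<alpha>"
      using Con_BI_join[OF \<alpha>_cong ab cd] Con_BI_meet[OF \<alpha>_cong ab cd]
      by (simp_all add: inner_cong_def join_ext_bl meet_ext_bl)
  next
    show "inner_cong \<alpha> \<subseteq> car B \<times> car B"
      using Con_BI_subset[OF \<alpha>_cong] by (auto simp: inner_cong_def car_ext_bl)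
    show "(x, x) \<in> inner_cong \<alpha>" if "x \<in> car B" for x
      using Con_BI_refl[OF \<alpha>_cong, of "EIn x"] that by (simp add: inner_cong_def car_ext_bl)
    show "(y, x) \<in> inner_cong \<alpha>" if "(x, y) \<in> inner_cong \<alpha>" for x y
      using Con_BI_sym[OF \<alpha>_cong] that by (simp add: inner_cong_def)
    show "(x, z) \<in> inner_cong \<alpha>" if "(x, y) \<in> inner_cong \<alpha>" "(y, z) \<in> inner_cong \<alpha>" for x y z
      using Con_BI_trans[OF \<alpha>_cong] that by (simp add: inner_cong_def)
    show "(inv B x, inv B y) \<in> inner_cong \<alpha>" if "(x, y) \<in> inner_cong \<alpha>" for x y
      using Con_BI_inv[OF \<alpha>_cong, of "EIn x" "EIn y"] that by (simp add: inner_cong_def inv_ext_bl)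
  qed
qed

lemma ext_inner_cong:
  assumes \<alpha>: "\<alpha> \<in> Con_BI01 E"
  shows "ext_cong (inner_cong \<alpha>) = \<alpha>"
proof (intro equalityI subsetI)
  fix p assume "p \<in> ext_cong (inner_cong \<alpha>)"
  then obtain u v where p: "p = (u, v)" "(u, v) \<in> ext_cong (inner_cong \<alpha>)" by (cases p) auto
  have "(EBot, EBot) \<in> \<alpha>" "(ETop, ETop) \<in> \<alpha>"
    using Con_BI_refl[OF Con_BI01_Con_BI[OF \<alpha>]] by (simp_all add: car_ext_bl)
  then show "p \<in> \<alpha>" using p(2) unfolding p(1) by (elim ext_congE) (simp_all add: inner_cong_def)
next
  fix p assume "p \<in> \<alpha>"
  then obtain u v where p: "p = (u, v)" "(u, v) \<in> \<alpha>" by (cases p) auto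
  then have v: "v \<in> car E" and bot_top: "(u = EBot \<longleftrightarrow> v = EBot) \<and> (u = ETop \<longleftrightarrow> v = ETop)"
    using Con_BI_subset[OF Con_BI01_Con_BI[OF \<alpha>]] Con_BI01_bot_top[OF \<alpha>]
    by (auto simp: bot_ext_bl top_ext_bl)
  show "p \<in> ext_cong (inner_cong \<alpha>)"
  proof (cases u)
    case (EIn x)
    then obtain y where "v = EIn y" using v bot_top by (auto simp: car_ext_bl)
    then show ?thesis using p EIn by (simp add: ext_cong_def inner_cong_def)
  qed (use p bot_top in \<open>simp_all add: ext_cong_def\<close>)
qed

lemma Con_BI01_ext_bl: "Con_BI01 E = ext_cong ` Con_BI B"
proof (intro equalityI subsetI)
  fix \<alpha> assume "\<alpha> \<in> Con_BI01 E"
  then show "\<alpha> \<in> ext_cong ` Con_BI B"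
    using inner_cong_Con_BI ext_inner_cong by (metis image_eqI)
qed (use ext_cong_Con_BI01 in blast)

end

lemma hsum_emb_ext_bl:
  "hsum_emb (\<lambda>i. ext_bl (Ls i)) i u = (case u of EBot \<Rightarrow> HBot | ETop \<Rightarrow> HTop | EIn x \<Rightarrow> HEl i (EIn x))"
  by (cases u) (simp_all add: hsum_emb_def bot_ext_bl top_ext_bl)

lemma boxplus_ext_cong_eq_of:
  assumes t: "1 \<le> t" and \<beta>: "\<And>i. i \<in> {1..t} \<Longrightarrow> equiv (car (Ls i)) (\<beta> i)"
  shows "boxplus_cong t (\<lambda>i. ext_bl (Ls i)) (\<lambda>i. ext_cong (\<beta> i)) =
    eq_of ({{HBot}, {HTop}} \<union> (\<Union>i\<in>{1..t}. (\<lambda>C. (\<lambda>x. HEl i (EIn x)) ` C) ` (car (Ls i) // \<beta> i)))"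
proof -
  have classes: "(\<lambda>C. hsum_emb (\<lambda>i. ext_bl (Ls i)) i ` C) ` (car (ext_bl (Ls i)) // ext_cong (\<beta> i)) =
      {{HBot}, {HTop}} \<union> (\<lambda>C. (\<lambda>x. HEl i (EIn x)) ` C) ` (car (Ls i) // \<beta> i)"
    if "i \<in> {1..t}" for i
    unfolding quotient_ext_cong[OF \<beta>[OF that]] by (simp add: hsum_emb_ext_bl image_image)
  have "(\<Union>i\<in>{1..t}. (\<lambda>C. hsum_emb (\<lambda>i. ext_bl (Ls i)) i ` C) ` (car (ext_bl (Ls i)) // ext_cong (\<beta> i))) =
      {{HBot}, {HTop}} \<union> (\<Union>i\<in>{1..t}. (\<lambda>C. (\<lambda>x. HEl i (EIn x)) ` C) ` (car (Ls i) // \<beta> i))"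
    using t by (simp add: classes UN_Un_distrib)
  then show ?thesis
    using boxplus_cong_eq_of[of t "\<lambda>i. ext_bl (Ls i)" "\<lambda>i. ext_cong (\<beta> i)"] equiv_ext_cong[OF \<beta>]
    by simp
qed

lemma eq_of_ext_partitions_eq_image:
  assumes "1 \<le> t"
  shows "{eq_of ({{HBot}, {HTop}} \<union>
        (\<Union>i\<in>{1..t}. (\<lambda>C. (\<lambda>x. HEl i (EIn x)) ` C) ` (car (Ls i) // \<beta> i)))
      | \<beta>. \<beta> \<in> PiE {1..t} (\<lambda>i. Con_BI (Ls i))} =
    (\<lambda>\<beta>. boxplus_cong t (\<lambda>i. ext_bl (Ls i)) (\<lambda>i. ext_cong (\<beta> i))) ` PiE {1..t} (\<lambda>i. Con_BI (Ls i))"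
  unfolding Setcompr_eq_image
proof (rule image_cong[OF refl])
  fix \<beta> assume "\<beta> \<in> PiE {1..t} (\<lambda>i. Con_BI (Ls i))"
  then have equiv: "\<And>i. i \<in> {1..t} \<Longrightarrow> equiv (car (Ls i)) (\<beta> i)"
    by (simp add: PiE_iff Con_BI_equiv)
  show "eq_of ({{HBot}, {HTop}} \<union>
      (\<Union>i\<in>{1..t}. (\<lambda>C. (\<lambda>x. HEl i (EIn x)) ` C) ` (car (Ls i) // \<beta> i))) =
    boxplus_cong t (\<lambda>i. ext_bl (Ls i)) (\<lambda>i. ext_cong (\<beta> i))"
    using boxplus_ext_cong_eq_of[OF assms equiv] by simp
qed

lemma exists_third_element:
  assumes "\<not> (finite A \<and> card A \<le> 2)"
  shows "\<exists>x\<in>A. x \<noteq> a \<and> x \<noteq> b"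
proof (rule ccontr)
  assume "\<not> ?thesis"
  then have sub: "A \<subseteq> {a, b}" by blast
  then have "finite A" by (rule finite_subset) simp
  moreover have "card A \<le> 2"
    using card_mono[OF _ sub] by (simp add: card_insert_if split: if_splits)
  ultimately show False using assms by blast
qed

lemma horizontal_sum_of_card_gt_2:
  assumes "2 \<le> t" and "\<forall>i\<in>{1..t}. bi_lattice (Ks i)"
    and "\<forall>i\<in>{1..t}. \<not> (finite (car (Ks i)) \<and> card (car (Ks i)) \<le> 2)"
  shows "horizontal_sum t Ks"
proof
  fix i assume "i \<in> {1..t}"
  then show "bi_lattice (Ks i)" "\<exists>x\<in>car (Ks i). x \<noteq> bot (Ks i) \<and> x \<noteq> top (Ks i)"
    using assms(2,3) exists_third_element[of "car (Ks i)"] by simp_all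
qed (rule assms(1))

lemma horizontal_sum_ext_bl:
  assumes "2 \<le> t" and "\<forall>i\<in>{1..t}. bi_lattice (Ls i)"
  shows "horizontal_sum t (\<lambda>i. ext_bl (Ls i))"
proof
  fix i assume "i \<in> {1..t}"
  then have "bilattice (Ls i)" using assms(2) by (simp add: bilattice_def)
  then show "bi_lattice (ext_bl (Ls i))"
    and "\<exists>x\<in>car (ext_bl (Ls i)). x \<noteq> bot (ext_bl (Ls i)) \<and> x \<noteq> top (ext_bl (Ls i))"
    by (rule bilattice.bi_lattice_ext_bl, rule bilattice.ext_bl_nontrivial)
qed (rule assms(1))

theorem proposition4p21:
  fixes t :: nat
    and Ks :: "nat \<Rightarrow> 'a bilat"
    and Ls :: "nat \<Rightarrow> 'b bilat"
  assumes "t \<ge> 2"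
    and "\<forall>i\<in>{1..t}. bi_lattice (Ks i)"
    and "\<forall>i\<in>{1..t}. bi_lattice (Ls i)"
    and "\<forall>i\<in>{1..t}. \<not> (finite (car (Ks i)) \<and> card (car (Ks i)) \<le> 2)"
  shows
   "Con_BI (hsum t Ks) =
        {hsum_cong t Ks \<alpha>s | \<alpha>s. \<alpha>s \<in> PiE {1..t} (\<lambda>i. Con_BI01 (Ks i))} \<union> {nabla (hsum t Ks)}
    \<and> order_iso (Con_BI (hsum t Ks)) (\<subseteq>)
        (prod_plus_carrier t (\<lambda>i. Con_BI01 (Ks i))) (prod_plus_le t)
    \<and> Con_BI (hsum t (\<lambda>i. ext_bl (Ls i))) =
        {eq_of ({{HBot}, {HTop}} \<union>
            (\<Union>i\<in>{1..t}. (\<lambda>C. (\<lambda>x. HEl i (EIn x)) ` C) ` (car (Ls i) // \<alpha>s i)))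
          | \<alpha>s. \<alpha>s \<in> PiE {1..t} (\<lambda>i. Con_BI (Ls i))}
        \<union> {nabla (hsum t (\<lambda>i. ext_bl (Ls i)))}
    \<and> order_iso (Con_BI (hsum t (\<lambda>i. ext_bl (Ls i)))) (\<subseteq>)
        (prod_plus_carrier t (\<lambda>i. Con_BI (Ls i))) (prod_plus_le t)"
proof -
  interpret K: horizontal_sum t Ks using assms(1,2,4) by (rule horizontal_sum_of_card_gt_2)
  interpret L: horizontal_sum t "\<lambda>i. ext_bl (Ls i)" using assms(1,3) by (rule horizontal_sum_ext_bl)
  have "\<forall>i\<in>{1..t}. Con_BI01 (ext_bl (Ls i)) = ext_cong ` Con_BI (Ls i)"
    using assms(3) bilattice.Con_BI01_ext_bl unfolding bilattice_def by blast
  note L_Con_BI = L.Con_BI_hsum_parametrized[OF this ext_cong_subset_iff]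
  have "1 \<le> t" using assms(1) by simp
  show ?thesis
    unfolding K.hsum_cong_Setcompr_eq_image eq_of_ext_partitions_eq_image[OF \<open>1 \<le> t\<close>]
    by (intro conjI K.Con_BI_hsum_image L_Con_BI)
qed

end
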